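(* The contravariant functors $\mathrm{ClpUp}$ and $\mathrm{Pf}$ establish a dual equivalence $\mathsf{CHA} \equiv^{op} \mathsf{CES}$ between the category of conditional Heyting algebras and the category of conditional Esakia spaces.
   Context: A conditional Heyting algebra is a Heyting algebra $(A,\top,\bot,\wedge,\vee,\to)$ with a binary operator $\mathrel{\Box\!\!\!\rightarrow}$ satisfying $a \mathrel{\Box\!\!\!\rightarrow} (b\wedge c) = (a\mathrel{\Box\!\!\!\rightarrow} b)\wedge(a\mathrel{\Box\!\!\!\rightarrow} c)$ and $a\mathrel{\Box\!\!\!\rightarrow}\top=\top$; morphisms ($\mathsf{CHA}$) are Heyting homomorphisms preserving $\mathrel{\Box\!\!\!\rightarrow}$. An Esakia space is a nonempty poset $(X,\leq)$ with a compact topology $\tau$ such that $x\not\leq y$ implies some clopen upset contains $x$ but not $y$, and ${\downarrow}a$ is clopen for each clopen $a$. A conditional Esakia space is an Esakia space $(X,\leq,\tau)$ with relations $\mathcal{R}=\{R_a \mid a \text{ a clopen upset}\}$ such that: $a \Rightarrow_c b := \{x \mid R_a[x]\subseteq b\}$ is clopen for all clopen upsets $a,b$; $(\leq\circ R_a\circ\leq)=R_a$; and $R_a[x]$ is closed for all $x$. Morphisms ($\mathsf{CES}$) are continuous bounded morphisms $f$ (order-preserving, and $f(x)\leq' z'$ implies $z'=f(z)$ for some $z\geq x$) such that for all clopen upsets $a'$: $xR_{f^{-1}(a')}y$ implies $f(x)R_{a'}f(y)$, and $f(x)R_{a'}z'$ implies there is $z$ with $xR_{f^{-1}(a')}z$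 and $f(z)\leq' z'$. The functor $\mathrm{ClpUp}$ sends a conditional Esakia space to the conditional Heyting algebra of its clopen upsets with $X,\emptyset,\cap,\cup$, implication $a\Rightarrow b = X\setminus{\downarrow}(a\setminus b)$ and conditional $\Rightarrow_c$ above, and a morphism $f$ to $f^{-1}$. The functor $\mathrm{Pf}$ sends a conditional Heyting algebra $A$ to its set of prime filters ordered by inclusion, with topology generated by the sets $\theta(a)=\{p \mid a\in p\}$ and their complements, and relations $x R_{\theta(a)} y$ iff $\{b\in A\mid a\mathrel{\Box\!\!\!\rightarrow} b\in x\}\subseteq y$; it sends a homomorphism $h$ to $h^{-1}$. *)

theory Defs
  imports "HOL-Analysis.Analysis"
begin

record 'a cha_sig =
  hcarrier :: "'a set"
  htop :: 'a
  hbot :: 'a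
  hmeet :: "'a \<Rightarrow> 'a \<Rightarrow> 'a"
  hjoin :: "'a \<Rightarrow> 'a \<Rightarrow> 'a"
  himp :: "'a \<Rightarrow> 'a \<Rightarrow> 'a"
  hcond :: "'a \<Rightarrow> 'a \<Rightarrow> 'a"

definition hle :: "('a, 'm) cha_sig_scheme \<Rightarrow> 'a \<Rightarrow> 'a \<Rightarrow> bool" where
  "hle A a b \<longleftrightarrow> hmeet A a b = a"

text \<open>Heyting algebra: a bounded lattice (given by its meet/join axioms) with relative
  pseudocomplement. We follow the convention top ~= bot.\<close>
definition heyting_algebra :: "('a, 'm) cha_sig_scheme \<Rightarrow> bool" where
  "heyting_algebra A \<longleftrightarrow>
     htop A \<in> hcarrier A \<and> hbot A \<in> hcarrier A \<and> htop A \<noteq> hbot A \<and>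
     (\<forall>a\<in>hcarrier A. \<forall>b\<in>hcarrier A.
        hmeet A a b \<in> hcarrier A \<and> hjoin A a b \<in> hcarrier A \<and> himp A a b \<in> hcarrier A) \<and>
     (\<forall>a\<in>hcarrier A. \<forall>b\<in>hcarrier A.
        hmeet A a b = hmeet A b a \<and> hjoin A a b = hjoin A b a \<and>
        hmeet A a (hjoin A a b) = a \<and> hjoin A a (hmeet A a b) = a) \<and>
     (\<forall>a\<in>hcarrier A. \<forall>b\<in>hcarrier A. \<forall>c\<in>hcarrier A.
        hmeet A a (hmeet A b c) = hmeet A (hmeet A a b) c \<and>
        hjoin A a (hjoin A b c) = hjoin A (hjoin A a b) c) \<and>
     (\<forall>a\<in>hcarrier A. hle A (hbot A) a \<and> hle A a (htop A)) \<and>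
     (\<forall>a\<in>hcarrier A. \<forall>b\<in>hcarrier A. \<forall>c\<in>hcarrier A.
        hle A c (himp A a b) \<longleftrightarrow> hle A (hmeet A c a) b)"

definition cha :: "('a, 'm) cha_sig_scheme \<Rightarrow> bool" where
  "cha A \<longleftrightarrow> heyting_algebra A \<and>
     (\<forall>a\<in>hcarrier A. \<forall>b\<in>hcarrier A. hcond A a b \<in> hcarrier A) \<and>
     (\<forall>a\<in>hcarrier A. \<forall>b\<in>hcarrier A. \<forall>c\<in>hcarrier A.
        hcond A a (hmeet A b c) = hmeet A (hcond A a b) (hcond A a c)) \<and>
     (\<forall>a\<in>hcarrier A. hcond A a (htop A) = htop A)"

definition cha_hom :: "('a, 'm) cha_sig_scheme \<Rightarrow> ('b, 'n) cha_sig_scheme \<Rightarrow> ('a \<Rightarrow> 'b) \<Rightarrow> bool" where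
  "cha_hom A B h \<longleftrightarrow> h \<in> hcarrier A \<rightarrow> hcarrier B \<and>
     h (htop A) = htop B \<and> h (hbot A) = hbot B \<and>
     (\<forall>a\<in>hcarrier A. \<forall>b\<in>hcarrier A.
        h (hmeet A a b) = hmeet B (h a) (h b) \<and> h (hjoin A a b) = hjoin B (h a) (h b) \<and>
        h (himp A a b) = himp B (h a) (h b) \<and> h (hcond A a b) = hcond B (h a) (h b))"

definition cha_iso :: "('a, 'm) cha_sig_scheme \<Rightarrow> ('b, 'n) cha_sig_scheme \<Rightarrow> ('a \<Rightarrow> 'b) \<Rightarrow> bool" where
  "cha_iso A B h \<longleftrightarrow> cha_hom A B h \<and>
     (\<exists>g. cha_hom B A g \<and> (\<forall>a\<in>hcarrier A. g (h a) = a) \<and> (\<forall>b\<in>hcarrier B. h (g b) = b))"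

text \<open>rel X a is the relation R_a; it is only meaningful for clopen upsets a.\<close>
record 'x ces_sig =
  pts :: "'x set"
  leq :: "'x \<Rightarrow> 'x \<Rightarrow> bool"
  topo :: "'x topology"
  rel :: "'x set \<Rightarrow> 'x \<Rightarrow> 'x \<Rightarrow> bool"

definition is_upset :: "('x, 'm) ces_sig_scheme \<Rightarrow> 'x set \<Rightarrow> bool" where
  "is_upset X U \<longleftrightarrow> U \<subseteq> pts X \<and> (\<forall>x\<in>U. \<forall>y\<in>pts X. leq X x y \<longrightarrow> y \<in> U)"

definition is_clopen :: "('x, 'm) ces_sig_scheme \<Rightarrow> 'x set \<Rightarrow> bool" where
  "is_clopen X U \<longleftrightarrow> openin (topo X) U \<and> closedin (topo X) U"

definition down :: "('x, 'm) ces_sig_scheme \<Rightarrow> 'x set \<Rightarrow> 'x set" where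
  "down X U = {y \<in> pts X. \<exists>x\<in>U. leq X y x}"

definition clopen_upsets :: "('x, 'm) ces_sig_scheme \<Rightarrow> 'x set set" where
  "clopen_upsets X = {U. is_clopen X U \<and> is_upset X U}"

definition ccond :: "('x, 'm) ces_sig_scheme \<Rightarrow> 'x set \<Rightarrow> 'x set \<Rightarrow> 'x set" where
  "ccond X a b = {x \<in> pts X. {y. rel X a x y} \<subseteq> b}"

definition esakia_space :: "('x, 'm) ces_sig_scheme \<Rightarrow> bool" where
  "esakia_space X \<longleftrightarrow>
     topspace (topo X) = pts X \<and> pts X \<noteq> {} \<and>
     (\<forall>x\<in>pts X. leq X x x) \<and>
     (\<forall>x\<in>pts X. \<forall>y\<in>pts X. leq X x y \<and> leq X y x \<longrightarrow> x = y) \<and>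
     (\<forall>x\<in>pts X. \<forall>y\<in>pts X. \<forall>z\<in>pts X. leq X x y \<and> leq X y z \<longrightarrow> leq X x z) \<and>
     compact_space (topo X) \<and>
     (\<forall>x\<in>pts X. \<forall>y\<in>pts X. \<not> leq X x y \<longrightarrow> (\<exists>U\<in>clopen_upsets X. x \<in> U \<and> y \<notin> U)) \<and>
     (\<forall>U. is_clopen X U \<longrightarrow> is_clopen X (down X U))"

definition ces :: "('x, 'm) ces_sig_scheme \<Rightarrow> bool" where
  "ces X \<longleftrightarrow> esakia_space X \<and>
     (\<forall>a\<in>clopen_upsets X.
        (\<forall>x y. rel X a x y \<longrightarrow> x \<in> pts X \<and> y \<in> pts X) \<and>
        (\<forall>b\<in>clopen_upsets X. is_clopen X (ccond X a b)) \<and>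
        (\<forall>x\<in>pts X. \<forall>y\<in>pts X.
           (\<exists>x'\<in>pts X. \<exists>y'\<in>pts X. leq X x x' \<and> rel X a x' y' \<and> leq X y' y) \<longleftrightarrow> rel X a x y) \<and>
        (\<forall>x\<in>pts X. closedin (topo X) {y. rel X a x y}))"

definition ces_morph :: "('x, 'm) ces_sig_scheme \<Rightarrow> ('y, 'n) ces_sig_scheme \<Rightarrow> ('x \<Rightarrow> 'y) \<Rightarrow> bool" where
  "ces_morph X Y f \<longleftrightarrow>
     f \<in> pts X \<rightarrow> pts Y \<and> continuous_map (topo X) (topo Y) f \<and>
     (\<forall>x\<in>pts X. \<forall>y\<in>pts X. leq X x y \<longrightarrow> leq Y (f x) (f y)) \<and>
     (\<forall>x\<in>pts X. \<forall>z'\<in>pts Y. leq Y (f x) z' \<longrightarrow> (\<exists>z\<in>pts X. leq X x z \<and> f z = z')) \<and>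
     (\<forall>a'\<in>clopen_upsets Y.
        (\<forall>x\<in>pts X. \<forall>y\<in>pts X. rel X {u \<in> pts X. f u \<in> a'} x y \<longrightarrow> rel Y a' (f x) (f y)) \<and>
        (\<forall>x\<in>pts X. \<forall>z'\<in>pts Y. rel Y a' (f x) z' \<longrightarrow>
           (\<exists>z\<in>pts X. rel X {u \<in> pts X. f u \<in> a'} x z \<and> leq Y (f z) z')))"

definition ces_iso :: "('x, 'm) ces_sig_scheme \<Rightarrow> ('y, 'n) ces_sig_scheme \<Rightarrow> ('x \<Rightarrow> 'y) \<Rightarrow> bool" where
  "ces_iso X Y f \<longleftrightarrow> ces_morph X Y f \<and>
     (\<exists>g. ces_morph Y X g \<and> (\<forall>x\<in>pts X. g (f x) = x) \<and> (\<forall>y\<in>pts Y. f (g y) = y))"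

definition clpup :: "'x ces_sig \<Rightarrow> 'x set cha_sig" where
  "clpup X = \<lparr> hcarrier = clopen_upsets X, htop = pts X, hbot = {},
     hmeet = (\<inter>), hjoin = (\<union>), himp = (\<lambda>a b. pts X - down X (a - b)),
     hcond = ccond X \<rparr>"

definition clpup_mor :: "'x ces_sig \<Rightarrow> ('x \<Rightarrow> 'y) \<Rightarrow> 'y set \<Rightarrow> 'x set" where
  "clpup_mor X f a' = {x \<in> pts X. f x \<in> a'}"

definition prime_filter :: "'a cha_sig \<Rightarrow> 'a set \<Rightarrow> bool" where
  "prime_filter A F \<longleftrightarrow> F \<subseteq> hcarrier A \<and> htop A \<in> F \<and> hbot A \<notin> F \<and>
     (\<forall>a\<in>F. \<forall>b\<in>hcarrier A. hle A a b \<longrightarrow> b \<in> F) \<and>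
     (\<forall>a\<in>F. \<forall>b\<in>F. hmeet A a b \<in> F) \<and>
     (\<forall>a\<in>hcarrier A. \<forall>b\<in>hcarrier A. hjoin A a b \<in> F \<longrightarrow> a \<in> F \<or> b \<in> F)"

definition theta :: "'a cha_sig \<Rightarrow> 'a \<Rightarrow> 'a set set" where
  "theta A a = {p. prime_filter A p \<and> a \<in> p}"

definition pf :: "'a cha_sig \<Rightarrow> 'a set ces_sig" where
  "pf A = \<lparr> pts = {p. prime_filter A p}, leq = (\<subseteq>),
     topo = topology_generated_by
              ((theta A ` hcarrier A) \<union> ((\<lambda>a. {p. prime_filter A p} - theta A a) ` hcarrier A)),
     rel = (\<lambda>S x y. prime_filter A x \<and> prime_filter A y \<and>
              (\<exists>a\<in>hcarrier A. S = theta A a \<and> {b \<in> hcarrier A. hcond A a b \<in> x} \<subseteq> y)) \<rparr>"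

definition pf_mor :: "'a cha_sig \<Rightarrow> ('a \<Rightarrow> 'b) \<Rightarrow> 'b set \<Rightarrow> 'a set" where
  "pf_mor A h p = {a \<in> hcarrier A. h a \<in> p}"

definition eps :: "'x ces_sig \<Rightarrow> 'x \<Rightarrow> 'x set set" where
  "eps X x = {a \<in> clopen_upsets X. x \<in> a}"

end

theory Submission
  imports Defs
begin

text \<open>
  This is Esakia duality extended by the conditional. For a conditional Heyting algebra \<open>A\<close>,
  the prime filter theorem makes \<open>\<theta>\<close> an embedding into the clopen upsets of the prime filter
  space, and compactness of that space (via Alexander's subbase theorem) makes every clopen
  upset some \<open>\<theta> a\<close>. It also makes every clopen a finite union of sets \<open>\<theta> a - \<theta> b\<close>, whose
  downsets are the complements of the \<open>\<theta> (a \<rightarrow> b)\<close>, so downsets of clopens are clopen.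
  Applying the prime filter theorem to the filter \<open>{b. a \<Rightarrow> b \<in> x}\<close> shows that
  \<open>\<theta> (a \<Rightarrow> b)\<close> is exactly the set of \<open>x\<close> with \<open>R\<^bsub>\<theta> a\<^esub>[x] \<subseteq> \<theta> b\<close>.
  For a conditional Esakia space \<open>X\<close>, \<open>\<epsilon> x\<close> (the clopen upsets containing \<open>x\<close>) is a
  bijection onto the prime filters by compactness and Priestley separation, and it preserves
  and reflects each \<open>R\<^sub>a\<close>: the closed set \<open>R\<^sub>a[x]\<close> can be separated by a clopen upset
  from any point not above one of its elements. Both functors act on morphisms by preimage,
  and naturality of \<open>\<theta>\<close> and \<open>\<epsilon>\<close> is a direct computation.
\<close>

section \<open>Topological preliminaries\<close>

lemma topology_generated_by_eq_subbase:
  "topology_generated_by S =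
     topology (arbitrary union_of (finite intersection_of (\<lambda>x. x \<in> S) relative_to \<Union>S))"
  (is "_ = topology ?R")
proof (rule topology_eq[THEN iffD2], intro allI iffI)
  fix U assume "openin (topology_generated_by S) U"
  then have "generate_topology_on S U" by (rule openin_topology_generated_by)
  moreover have "?R s" if "s \<in> S" for s
    using that by (intro arbitrary_union_of_inc)
      (auto simp: relative_to_def intro!: exI[of _ s] finite_intersection_of_inc)
  ultimately have "?R U"
    using generate_topology_on_coarsest istopology_subbase by blast
  then show "openin (topology ?R) U" by (simp add: openin_subbase)
next
  fix U assume U: "openin (topology ?R) U"
  have "openin (topology_generated_by S) (\<Union>S)"
    using openin_topspace[of "topology_generated_by S"] by simp
  then show "openin (topology_generated_by S) U"
    using minimal_topology_subbase[OF _ _ U] topology_generated_by_Basis by blast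
qed

lemma compactin_finite_subcover:
  assumes "compactin T K" "\<And>k. k \<in> K \<Longrightarrow> openin T (U k)" "\<And>k. k \<in> K \<Longrightarrow> k \<in> U k"
  shows "\<exists>K0. finite K0 \<and> K0 \<subseteq> K \<and> K \<subseteq> \<Union>(U ` K0)"
proof -
  have "\<forall>V\<in>U ` K. openin T V" using assms(2) by blast
  moreover have "K \<subseteq> \<Union>(U ` K)" using assms(3) by blast
  ultimately obtain F where F: "finite F" "F \<subseteq> U ` K" "K \<subseteq> \<Union>F"
    using assms(1) unfolding compactin_def by meson
  then obtain K0 where "K0 \<subseteq> K" "finite K0" "F = U ` K0"
    using finite_subset_image[OF F(1,2)] by blast
  then show ?thesis using F by blast
qed

lemma separating_family_local_base:
  assumes cpt: "compact_space T" and Vo: "openin T V"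
    and B: "\<And>W. W \<in> B \<Longrightarrow> closedin T W \<and> openin T W" and top: "topspace T \<in> B"
    and int: "\<And>W1 W2. W1 \<in> B \<Longrightarrow> W2 \<in> B \<Longrightarrow> W1 \<inter> W2 \<in> B"
    and sep: "\<And>Q. Q \<in> topspace T \<Longrightarrow> Q \<notin> V \<Longrightarrow> \<exists>W\<in>B. P \<in> W \<and> Q \<notin> W"
    and P: "P \<in> V"
  shows "\<exists>W\<in>B. P \<in> W \<and> W \<subseteq> V"
proof -
  have fin_Inter: "topspace T \<inter> \<Inter>(W ` K) \<in> B" if "finite K" "\<forall>k\<in>K. W k \<in> B"
    for K and W :: "'b \<Rightarrow> 'a set"
    using that
  proof (induction K rule: finite_induct)
    case empty
    then show ?case using top by simp
  next
    case (insert x F)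
    have "topspace T \<inter> \<Inter>(W ` insert x F) = W x \<inter> (topspace T \<inter> \<Inter>(W ` F))" by auto
    then show ?case using insert int by auto
  qed
  let ?K = "topspace T - V"
  have Kc: "compactin T ?K" using closedin_compact_space[OF cpt] Vo by blast
  have "\<forall>Q\<in>?K. \<exists>W. W \<in> B \<and> P \<in> W \<and> Q \<notin> W" using sep by blast
  then obtain Wf where Wf: "\<And>Q. Q \<in> ?K \<Longrightarrow> Wf Q \<in> B \<and> P \<in> Wf Q \<and> Q \<notin> Wf Q" by metis
  have op: "openin T (topspace T - Wf Q)" if "Q \<in> ?K" for Q
    using B Wf that by blast
  have mem: "Q \<in> topspace T - Wf Q" if "Q \<in> ?K" for Q using Wf that by blast
  obtain K0 where K0: "finite K0" "K0 \<subseteq> ?K" "?K \<subseteq> \<Union>((\<lambda>Q. topspace T - Wf Q) ` K0)"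
    using compactin_finite_subcover[OF Kc op mem] by blast
  let ?W = "topspace T \<inter> \<Inter>(Wf ` K0)"
  have "?W \<in> B" using fin_Inter[OF K0(1)] Wf K0(2) by blast
  moreover have "P \<in> ?W" using Wf K0(2) P openin_subset[OF Vo] by blast
  moreover have "?W \<subseteq> V" using K0(3) by blast
  ultimately show ?thesis by blast
qed

lemma clopen_finite_union_of_separating:
  assumes cpt: "compact_space T" and Vc: "closedin T V" and Vo: "openin T V"
    and B: "\<And>W. W \<in> B \<Longrightarrow> closedin T W \<and> openin T W" and top: "topspace T \<in> B"
    and int: "\<And>W1 W2. W1 \<in> B \<Longrightarrow> W2 \<in> B \<Longrightarrow> W1 \<inter> W2 \<in> B"
    and sep: "\<And>P Q. P \<in> V \<Longrightarrow> Q \<in> topspace T \<Longrightarrow> Q \<notin> V \<Longrightarrow> \<exists>W\<in>B. P \<in> W \<and> Q \<notin> W"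
  shows "\<exists>F. finite F \<and> F \<subseteq> B \<and> V = \<Union>F"
proof -
  have "\<exists>W\<in>B. P \<in> W \<and> W \<subseteq> V" if P: "P \<in> V" for P
    using separating_family_local_base[OF cpt Vo B top int sep[OF P] P] .
  then obtain Wp where Wp: "\<And>P. P \<in> V \<Longrightarrow> Wp P \<in> B \<and> P \<in> Wp P \<and> Wp P \<subseteq> V"
    by metis
  have op: "openin T (Wp P)" if "P \<in> V" for P using Wp[OF that] B by blast
  have mem: "P \<in> Wp P" if "P \<in> V" for P using Wp[OF that] by blast
  obtain V0 where V0: "finite V0" "V0 \<subseteq> V" "V \<subseteq> \<Union>(Wp ` V0)"
    using compactin_finite_subcover[OF closedin_compact_space[OF cpt Vc] op mem] by blast
  show ?thesis
    using V0 Wp by (intro exI[of _ "Wp ` V0"]) blast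
qed

section \<open>Heyting algebras and prime filters\<close>

locale HA =
  fixes A :: "'a cha_sig"
  assumes heyting: "heyting_algebra A"
begin

abbreviation "car \<equiv> hcarrier A"
abbreviation "mt \<equiv> hmeet A"
abbreviation "jn \<equiv> hjoin A"
abbreviation "im \<equiv> himp A"
abbreviation "tp \<equiv> htop A"
abbreviation "bt \<equiv> hbot A"
abbreviation "le \<equiv> hle A"

lemma tp_in [simp]: "tp \<in> car" and bt_in [simp]: "bt \<in> car" and tp_ne_bt: "tp \<noteq> bt"
  using heyting unfolding heyting_algebra_def by blast+

lemma mt_in [simp]: "a \<in> car \<Longrightarrow> b \<in> car \<Longrightarrow> mt a b \<in> car"
  and jn_in [simp]: "a \<in> car \<Longrightarrow> b \<in> car \<Longrightarrow> jn a b \<in> car"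
  and im_in [simp]: "a \<in> car \<Longrightarrow> b \<in> car \<Longrightarrow> im a b \<in> car"
  using heyting unfolding heyting_algebra_def by blast+

lemma mt_comm: "a \<in> car \<Longrightarrow> b \<in> car \<Longrightarrow> mt a b = mt b a"
  and jn_comm: "a \<in> car \<Longrightarrow> b \<in> car \<Longrightarrow> jn a b = jn b a"
  and mt_jn_absorb: "a \<in> car \<Longrightarrow> b \<in> car \<Longrightarrow> mt a (jn a b) = a"
  and jn_mt_absorb: "a \<in> car \<Longrightarrow> b \<in> car \<Longrightarrow> jn a (mt a b) = a"
  using heyting unfolding heyting_algebra_def by blast+

lemma mt_assoc: "a \<in> car \<Longrightarrow> b \<in> car \<Longrightarrow> c \<in> car \<Longrightarrow> mt a (mt b c) = mt (mt a b) c"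
  and jn_assoc: "a \<in> car \<Longrightarrow> b \<in> car \<Longrightarrow> c \<in> car \<Longrightarrow> jn a (jn b c) = jn (jn a b) c"
  using heyting unfolding heyting_algebra_def by blast+

lemma bt_le: "a \<in> car \<Longrightarrow> le bt a" and le_tp: "a \<in> car \<Longrightarrow> le a tp"
  using heyting unfolding heyting_algebra_def by blast+

lemma le_im_iff: "a \<in> car \<Longrightarrow> b \<in> car \<Longrightarrow> c \<in> car \<Longrightarrow> le c (im a b) \<longleftrightarrow> le (mt c a) b"
  using heyting unfolding heyting_algebra_def by blast

lemma le_iff_mt: "le a b \<longleftrightarrow> mt a b = a"
  by (simp add: hle_def)

lemma mt_idem: "a \<in> car \<Longrightarrow> mt a a = a"
  using mt_jn_absorb[of a "mt a a"] jn_mt_absorb[of a a] by simp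

lemma le_refl: "a \<in> car \<Longrightarrow> le a a"
  by (simp add: le_iff_mt mt_idem)

lemma le_iff_jn: "a \<in> car \<Longrightarrow> b \<in> car \<Longrightarrow> le a b \<longleftrightarrow> jn a b = b"
  unfolding le_iff_mt
  using mt_jn_absorb[of a b] jn_mt_absorb[of b a] mt_comm[of a b] jn_comm[of a b] by auto

lemma le_antisym: "a \<in> car \<Longrightarrow> b \<in> car \<Longrightarrow> le a b \<Longrightarrow> le b a \<Longrightarrow> a = b"
  unfolding le_iff_mt using mt_comm by force

lemma le_trans: "a \<in> car \<Longrightarrow> b \<in> car \<Longrightarrow> c \<in> car \<Longrightarrow> le a b \<Longrightarrow> le b c \<Longrightarrow> le a c"
  unfolding le_iff_mt using mt_assoc[of a b c] by simp

lemma mt_le1: "a \<in> car \<Longrightarrow> b \<in> car \<Longrightarrow> le (mt a b) a"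
  unfolding le_iff_mt using mt_comm[of "mt a b" a] mt_assoc[of a a b] by (simp add: mt_idem)

lemma mt_le2: "a \<in> car \<Longrightarrow> b \<in> car \<Longrightarrow> le (mt a b) b"
  using mt_comm mt_le1 by force

lemma le_mt_iff: "a \<in> car \<Longrightarrow> b \<in> car \<Longrightarrow> c \<in> car \<Longrightarrow> le c (mt a b) \<longleftrightarrow> le c a \<and> le c b"
proof
  assume "a \<in> car" "b \<in> car" "c \<in> car" "le c (mt a b)"
  then show "le c a \<and> le c b"
    using le_trans[of c "mt a b"] mt_le1 mt_le2 by simp
next
  assume "a \<in> car" "b \<in> car" "c \<in> car" "le c a \<and> le c b"
  then show "le c (mt a b)"
    using mt_assoc[of c a b] by (simp add: le_iff_mt)
qed

lemma jn_ge1: "a \<in> car \<Longrightarrow> b \<in> car \<Longrightarrow> le a (jn a b)"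
  by (simp add: mt_jn_absorb le_iff_mt)

lemma jn_ge2: "a \<in> car \<Longrightarrow> b \<in> car \<Longrightarrow> le b (jn a b)"
  using jn_comm jn_ge1 by force

lemma jn_le_iff: "a \<in> car \<Longrightarrow> b \<in> car \<Longrightarrow> c \<in> car \<Longrightarrow> le (jn a b) c \<longleftrightarrow> le a c \<and> le b c"
proof
  assume "a \<in> car" "b \<in> car" "c \<in> car" "le (jn a b) c"
  then show "le a c \<and> le b c"
    using le_trans[of a "jn a b" c] le_trans[of b "jn a b" c] jn_ge1 jn_ge2 by simp
next
  assume "a \<in> car" "b \<in> car" "c \<in> car" "le a c \<and> le b c"
  then show "le (jn a b) c"
    using jn_assoc[of a b c] by (simp add: le_iff_jn)
qed

lemma mt_mono:
  "a \<in> car \<Longrightarrow> b \<in> car \<Longrightarrow> c \<in> car \<Longrightarrow> d \<in> car \<Longrightarrow> le a c \<Longrightarrow> le b d \<Longrightarrow> le (mt a b) (mt c d)"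
  by (simp add: le_mt_iff) (meson le_trans mt_in mt_le1 mt_le2)

lemma jn_mono:
  "a \<in> car \<Longrightarrow> b \<in> car \<Longrightarrow> c \<in> car \<Longrightarrow> d \<in> car \<Longrightarrow> le a c \<Longrightarrow> le b d \<Longrightarrow> le (jn a b) (jn c d)"
  by (simp add: jn_le_iff) (meson le_trans jn_in jn_ge1 jn_ge2)

lemma mt_im_le: "a \<in> car \<Longrightarrow> b \<in> car \<Longrightarrow> le (mt a (im a b)) b"
  using le_im_iff[of a b "im a b"] le_refl[of "im a b"] mt_comm[of a "im a b"] by simp

lemma mt_jn_distrib_le:
  assumes a: "a \<in> car" and b: "b \<in> car" and c: "c \<in> car"
  shows "le (mt a (jn b c)) (jn (mt a b) (mt a c))"
proof -
  let ?d = "jn (mt a b) (mt a c)"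
  have "le b (im a ?d)" and "le c (im a ?d)"
    using a b c by (simp_all add: le_im_iff mt_comm jn_ge1 jn_ge2)
  then have "le (jn b c) (im a ?d)"
    using a b c by (simp add: jn_le_iff)
  then show ?thesis
    using a b c by (simp add: le_im_iff mt_comm)
qed

definition is_filter :: "'a set \<Rightarrow> bool" where
  "is_filter F \<longleftrightarrow> F \<subseteq> car \<and> tp \<in> F \<and>
     (\<forall>a\<in>F. \<forall>b\<in>car. le a b \<longrightarrow> b \<in> F) \<and> (\<forall>a\<in>F. \<forall>b\<in>F. mt a b \<in> F)"

definition is_ideal :: "'a set \<Rightarrow> bool" where
  "is_ideal I \<longleftrightarrow> I \<subseteq> car \<and> bt \<in> I \<and>
     (\<forall>a\<in>I. \<forall>b\<in>car. le b a \<longrightarrow> b \<in> I) \<and> (\<forall>a\<in>I. \<forall>b\<in>I. jn a b \<in> I)"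

lemma is_filterD:
  assumes "is_filter F"
  shows "F \<subseteq> car" "tp \<in> F" "\<And>a b. a \<in> F \<Longrightarrow> b \<in> car \<Longrightarrow> le a b \<Longrightarrow> b \<in> F"
    "\<And>a b. a \<in> F \<Longrightarrow> b \<in> F \<Longrightarrow> mt a b \<in> F"
  using assms unfolding is_filter_def by blast+

lemma is_filterI:
  assumes "F \<subseteq> car" "tp \<in> F" "\<And>a b. a \<in> F \<Longrightarrow> b \<in> car \<Longrightarrow> le a b \<Longrightarrow> b \<in> F"
    "\<And>a b. a \<in> F \<Longrightarrow> b \<in> F \<Longrightarrow> mt a b \<in> F"
  shows "is_filter F"
  using assms unfolding is_filter_def by blast

lemma is_idealD:
  assumes "is_ideal I"
  shows "I \<subseteq> car" "bt \<in> I" "\<And>a b. a \<in> I \<Longrightarrow> b \<in> car \<Longrightarrow> le b a \<Longrightarrow> b \<in> I"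
    "\<And>a b. a \<in> I \<Longrightarrow> b \<in> I \<Longrightarrow> jn a b \<in> I"
  using assms unfolding is_ideal_def by blast+

lemma is_idealI:
  assumes "I \<subseteq> car" "bt \<in> I" "\<And>a b. a \<in> I \<Longrightarrow> b \<in> car \<Longrightarrow> le b a \<Longrightarrow> b \<in> I"
    "\<And>a b. a \<in> I \<Longrightarrow> b \<in> I \<Longrightarrow> jn a b \<in> I"
  shows "is_ideal I"
  using assms unfolding is_ideal_def by blast

lemma is_filter_principal: "a \<in> car \<Longrightarrow> is_filter {c \<in> car. le a c}"
  unfolding is_filter_def by (auto intro: le_trans le_tp simp: le_mt_iff)

lemma is_ideal_principal: "a \<in> car \<Longrightarrow> is_ideal {c \<in> car. le c a}"
  unfolding is_ideal_def by (auto intro: le_trans bt_le simp: jn_le_iff)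

lemma prime_filter_is_filter: "prime_filter A P \<Longrightarrow> is_filter P"
  unfolding prime_filter_def is_filter_def by blast

definition filter_join :: "'a set \<Rightarrow> 'a set \<Rightarrow> 'a set" where
  "filter_join F G = {c \<in> car. \<exists>f\<in>F. \<exists>g\<in>G. le (mt f g) c}"

lemma is_filter_filter_join:
  assumes F: "is_filter F" and G: "is_filter G"
  shows "is_filter (filter_join F G)"
proof (rule is_filterI)
  show "filter_join F G \<subseteq> car" "tp \<in> filter_join F G"
    using is_filterD(2)[OF F] is_filterD(2)[OF G] le_tp[of "mt tp tp"]
    by (auto simp: filter_join_def)
next
  fix a b assume "a \<in> filter_join F G" and b: "b \<in> car" "le a b"
  then obtain f g where fg: "f \<in> F" "g \<in> G" "le (mt f g) a" "a \<in> car"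
    unfolding filter_join_def by blast
  moreover have "f \<in> car" "g \<in> car"
    using fg is_filterD(1) F G by blast+
  ultimately have "le (mt f g) b"
    using b le_trans[of "mt f g" a b] by simp
  then show "b \<in> filter_join F G"
    using fg b unfolding filter_join_def by blast
next
  fix a b assume "a \<in> filter_join F G" "b \<in> filter_join F G"
  then obtain f g f' g' where fg: "f \<in> F" "g \<in> G" "f' \<in> F" "g' \<in> G"
    and le: "le (mt f g) a" "le (mt f' g') b" and ab: "a \<in> car" "b \<in> car"
    unfolding filter_join_def by blast
  have car: "f \<in> car" "g \<in> car" "f' \<in> car" "g' \<in> car"
    using fg is_filterD(1) F G by blast+
  have "le (mt (mt f f') (mt g g')) (mt f g)" "le (mt (mt f f') (mt g g')) (mt f' g')"
    using car by (simp_all add: mt_mono mt_le1 mt_le2)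
  then have "le (mt (mt f f') (mt g g')) a" "le (mt (mt f f') (mt g g')) b"
    using le car ab le_trans[of "mt (mt f f') (mt g g')" "mt f g" a]
      le_trans[of "mt (mt f f') (mt g g')" "mt f' g'" b] by simp_all
  then have "le (mt (mt f f') (mt g g')) (mt a b)"
    using car ab by (simp add: le_mt_iff)
  moreover have "mt f f' \<in> F" "mt g g' \<in> G"
    using fg is_filterD(4) F G by blast+
  ultimately show "mt a b \<in> filter_join F G"
    using ab unfolding filter_join_def by auto
qed

lemma filter_join_upper:
  assumes F: "is_filter F" and G: "is_filter G"
  shows "F \<subseteq> filter_join F G" "G \<subseteq> filter_join F G"
proof -
  have "le (mt f tp) f" if "f \<in> F" for f
    using that is_filterD(1)[OF F] by (blast intro: mt_le1 tp_in)
  then show "F \<subseteq> filter_join F G"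
    using is_filterD(1)[OF F] is_filterD(2)[OF G] unfolding filter_join_def by blast
  have "le (mt tp g) g" if "g \<in> G" for g
    using that is_filterD(1)[OF G] by (blast intro: mt_le2 tp_in)
  then show "G \<subseteq> filter_join F G"
    using is_filterD(1)[OF G] is_filterD(2)[OF F] unfolding filter_join_def by blast
qed

lemma is_filter_Union_chain:
  assumes C: "C \<noteq> {}" "chain\<^sub>\<subseteq> C" and filters: "\<And>G. G \<in> C \<Longrightarrow> is_filter G"
  shows "is_filter (\<Union>C)"
proof (rule is_filterI)
  show "\<Union>C \<subseteq> car" "tp \<in> \<Union>C"
    using C(1) filters is_filterD(1,2) by blast+
  show "\<And>a b. a \<in> \<Union>C \<Longrightarrow> b \<in> car \<Longrightarrow> le a b \<Longrightarrow> b \<in> \<Union>C"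
    using filters is_filterD(3) by blast
  fix a b assume "a \<in> \<Union>C" "b \<in> \<Union>C"
  then obtain G G' where G: "G \<in> C" "G' \<in> C" "a \<in> G" "b \<in> G'" by blast
  moreover have "G \<subseteq> G' \<or> G' \<subseteq> G"
    using C(2) G(1,2) by (auto simp: chain_subset_def)
  ultimately have "mt a b \<in> G \<or> mt a b \<in> G'"
    using is_filterD(4)[OF filters] by blast
  then show "mt a b \<in> \<Union>C"
    using G(1,2) by blast
qed

context
  fixes M I
  assumes M: "is_filter M" and I: "is_ideal I" and MI: "M \<inter> I = {}"
    and maximal: "\<And>G. is_filter G \<Longrightarrow> M \<subseteq> G \<Longrightarrow> G \<inter> I = {} \<Longrightarrow> G = M"
begin

lemma maximal_filter_outside:
  assumes a: "a \<in> car" "a \<notin> M"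
  shows "\<exists>m\<in>M. mt m a \<in> I"
proof (rule ccontr)
  assume none: "\<not> ?thesis"
  let ?G = "filter_join M {c \<in> car. le a c}"
  have up: "is_filter {c \<in> car. le a c}"
    using a(1) by (rule is_filter_principal)
  have "?G \<inter> I = {}"
  proof (rule ccontr)
    assume "?G \<inter> I \<noteq> {}"
    then obtain m g c where "m \<in> M" "g \<in> car" "le a g" "le (mt m g) c" "c \<in> car" "c \<in> I"
      unfolding filter_join_def by blast
    moreover have "m \<in> car" using \<open>m \<in> M\<close> is_filterD(1)[OF M] by blast
    ultimately have "le (mt m a) c"
      using a le_trans[of "mt m a" "mt m g" c] mt_mono[of m a m g] le_refl[of m] by simp
    then have "mt m a \<in> I"
      using \<open>c \<in> I\<close> \<open>m \<in> car\<close> a is_idealD(3)[OF I] by simp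
    then show False using none \<open>m \<in> M\<close> by blast
  qed
  then have "?G = M"
    using maximal is_filter_filter_join[OF M up] filter_join_upper(1)[OF M up] by blast
  moreover have "a \<in> ?G"
    using filter_join_upper(2)[OF M up] a le_refl by blast
  ultimately show False
    using a(2) by blast
qed

text \<open>Distributivity is what makes a maximal filter avoiding an ideal prime.\<close>

lemma prime_filter_if_maximal: "prime_filter A M"
  unfolding prime_filter_def
proof (intro conjI ballI impI)
  show "M \<subseteq> car" "tp \<in> M" "bt \<notin> M"
    using is_filterD(1,2)[OF M] MI is_idealD(2)[OF I] by auto
  show "\<And>a b. a \<in> M \<Longrightarrow> b \<in> car \<Longrightarrow> le a b \<Longrightarrow> b \<in> M"
    "\<And>a b. a \<in> M \<Longrightarrow> b \<in> M \<Longrightarrow> mt a b \<in> M"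
    using is_filterD(3,4)[OF M] by blast+
next
  fix a b assume a: "a \<in> car" and b: "b \<in> car" and ab: "jn a b \<in> M"
  show "a \<in> M \<or> b \<in> M"
  proof (rule ccontr)
    assume "\<not> (a \<in> M \<or> b \<in> M)"
    then obtain m1 m2 where m: "m1 \<in> M" "m2 \<in> M" and I12: "mt m1 a \<in> I" "mt m2 b \<in> I"
      using maximal_filter_outside a b by blast
    have c: "m1 \<in> car" "m2 \<in> car" using m is_filterD(1)[OF M] by auto
    let ?m = "mt m1 m2"
    have "le (mt ?m a) (mt m1 a)" "le (mt ?m b) (mt m2 b)"
      using c a b mt_mono[of ?m a m1 a] mt_mono[of ?m b m2 b] mt_le1[of m1 m2] mt_le2[of m1 m2]
        le_refl[of a] le_refl[of b] by simp_all
    then have "le (jn (mt ?m a) (mt ?m b)) (jn (mt m1 a) (mt m2 b))"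
      using c a b by (simp add: jn_mono)
    moreover have "le (mt ?m (jn a b)) (jn (mt ?m a) (mt ?m b))"
      using c a b by (simp add: mt_jn_distrib_le)
    ultimately have "le (mt ?m (jn a b)) (jn (mt m1 a) (mt m2 b))"
      using c a b le_trans[of "mt ?m (jn a b)" "jn (mt ?m a) (mt ?m b)"] by simp
    moreover have "jn (mt m1 a) (mt m2 b) \<in> I"
      using I12 is_idealD(4)[OF I] by blast
    ultimately have "mt ?m (jn a b) \<in> I"
      using c a b is_idealD(3)[OF I] by simp
    moreover have "mt ?m (jn a b) \<in> M"
      using m ab is_filterD(4)[OF M] by blast
    ultimately show False using MI by blast
  qed
qed

end

theorem prime_filter_theorem:
  assumes F: "is_filter F" and I: "is_ideal I" and disj: "F \<inter> I = {}"
  shows "\<exists>P. prime_filter A P \<and> F \<subseteq> P \<and> P \<inter> I = {}"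
proof -
  define \<F> where "\<F> = {G. is_filter G \<and> F \<subseteq> G \<and> G \<inter> I = {}}"
  have chain_bound: "\<exists>U\<in>\<F>. \<forall>G\<in>C. G \<subseteq> U" if C: "C \<in> chains \<F>" for C
  proof (cases "C = {}")
    case True
    then show ?thesis using F disj unfolding \<F>_def by auto
  next
    case False
    have "C \<subseteq> \<F>" "chain\<^sub>\<subseteq> C"
      using C by (auto simp: chains_def)
    then have "is_filter (\<Union>C)" "F \<subseteq> \<Union>C" "\<Union>C \<inter> I = {}"
      using is_filter_Union_chain[OF False] False unfolding \<F>_def by blast+
    then show ?thesis
      unfolding \<F>_def by (intro bexI[of _ "\<Union>C"]) auto
  qed
  have "\<exists>M\<in>\<F>. \<forall>G\<in>\<F>. M \<subseteq> G \<longrightarrow> G = M"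
    by (rule Zorn_Lemma2, rule ballI, rule chain_bound)
  then obtain M where "M \<in> \<F>" and max: "\<forall>G\<in>\<F>. M \<subseteq> G \<longrightarrow> G = M"
    by blast
  then have M: "is_filter M" "F \<subseteq> M" "M \<inter> I = {}"
    unfolding \<F>_def by blast+
  have "G = M" if "is_filter G" "M \<subseteq> G" "G \<inter> I = {}" for G
    using max that M(2) unfolding \<F>_def by blast
  then have "prime_filter A M"
    by (rule prime_filter_if_maximal[OF M(1) I M(3)])
  then show ?thesis
    using M(2,3) by blast
qed

lemma prime_filter_avoiding:
  assumes F: "is_filter F" and b: "b \<in> car" "b \<notin> F"
  shows "\<exists>P. prime_filter A P \<and> F \<subseteq> P \<and> b \<notin> P"
proof -
  have "F \<inter> {c \<in> car. le c b} = {}"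
    using b is_filterD(3)[OF F] by blast
  then show ?thesis
    using prime_filter_theorem[OF F is_ideal_principal[OF b(1)]] b le_refl by blast
qed

lemma prime_filter_separating:
  "a \<in> car \<Longrightarrow> b \<in> car \<Longrightarrow> \<not> le a b \<Longrightarrow> \<exists>P. prime_filter A P \<and> a \<in> P \<and> b \<notin> P"
  using prime_filter_avoiding[OF is_filter_principal, of a b] le_refl by auto

lemma prime_filter_exists: "\<exists>P. prime_filter A P"
  using prime_filter_separating[of tp bt] tp_ne_bt bt_le[of tp] le_antisym[of tp bt] by auto

lemma prime_filterD:
  assumes "prime_filter A P"
  shows "P \<subseteq> car" "tp \<in> P" "bt \<notin> P"
    "\<And>a b. a \<in> P \<Longrightarrow> b \<in> car \<Longrightarrow> le a b \<Longrightarrow> b \<in> P"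
    "\<And>a b. a \<in> P \<Longrightarrow> b \<in> P \<Longrightarrow> mt a b \<in> P"
    "\<And>a b. a \<in> car \<Longrightarrow> b \<in> car \<Longrightarrow> jn a b \<in> P \<Longrightarrow> a \<in> P \<or> b \<in> P"
  using assms unfolding prime_filter_def by auto

lemma prime_filter_mt_iff:
  "prime_filter A P \<Longrightarrow> a \<in> car \<Longrightarrow> b \<in> car \<Longrightarrow> mt a b \<in> P \<longleftrightarrow> a \<in> P \<and> b \<in> P"
  by (meson mt_in mt_le1 mt_le2 prime_filterD)

lemma prime_filter_jn_iff:
  "prime_filter A P \<Longrightarrow> a \<in> car \<Longrightarrow> b \<in> car \<Longrightarrow> jn a b \<in> P \<longleftrightarrow> a \<in> P \<or> b \<in> P"
  by (meson jn_in jn_ge1 jn_ge2 prime_filterD)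

lemma prime_filter_mp:
  "prime_filter A P \<Longrightarrow> a \<in> car \<Longrightarrow> b \<in> car \<Longrightarrow> im a b \<in> P \<Longrightarrow> a \<in> P \<Longrightarrow> b \<in> P"
  by (metis im_in mt_im_le prime_filterD(4,5))

section \<open>The prime filter space\<close>

definition "PF = {p. prime_filter A p}"

definition "subbasis = theta A ` car \<union> (\<lambda>a. PF - theta A a) ` car"

abbreviation "th \<equiv> theta A"
abbreviation "PT \<equiv> topo (pf A)"

lemma pf_simps: "pts (pf A) = PF" "leq (pf A) = (\<subseteq>)" "PT = topology_generated_by subbasis"
  by (simp_all add: pf_def PF_def subbasis_def)

lemma mem_th: "P \<in> th a \<longleftrightarrow> prime_filter A P \<and> a \<in> P"
  by (simp add: theta_def)

lemma mem_PF: "P \<in> PF \<longleftrightarrow> prime_filter A P"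
  by (simp add: PF_def)

lemma th_subset: "th a \<subseteq> PF"
  by (auto simp: mem_th mem_PF)

lemma th_tp: "th tp = PF"
  using prime_filterD(2) by (auto simp: mem_th mem_PF)

lemma th_bt: "th bt = {}"
  using prime_filterD(3) by (auto simp: mem_th)

lemma th_mt: "a \<in> car \<Longrightarrow> b \<in> car \<Longrightarrow> th (mt a b) = th a \<inter> th b"
  using prime_filter_mt_iff by (auto simp: mem_th)

lemma th_jn: "a \<in> car \<Longrightarrow> b \<in> car \<Longrightarrow> th (jn a b) = th a \<union> th b"
  using prime_filter_jn_iff by (auto simp: mem_th)

lemma th_subset_iff: "a \<in> car \<Longrightarrow> b \<in> car \<Longrightarrow> th a \<subseteq> th b \<longleftrightarrow> le a b"
proof
  assume ab: "a \<in> car" "b \<in> car" "th a \<subseteq> th b"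
  show "le a b"
  proof (rule ccontr)
    assume "\<not> le a b"
    then obtain P where "prime_filter A P" "a \<in> P" "b \<notin> P"
      using prime_filter_separating ab by blast
    then show False
      using ab(3) by (auto simp: mem_th)
  qed
next
  assume "a \<in> car" "b \<in> car" "le a b"
  then show "th a \<subseteq> th b"
    using prime_filterD(4) by (auto simp: mem_th)
qed

lemma inj_on_th: "inj_on th car"
  by (rule inj_onI) (metis order_refl th_subset_iff le_antisym)

lemma Union_subbasis: "\<Union>subbasis = PF"
  using th_subset th_tp tp_in unfolding subbasis_def by blast

lemma topspace_PT: "topspace PT = PF"
  by (simp add: pf_simps Union_subbasis)

lemma openin_th: "a \<in> car \<Longrightarrow> openin PT (th a)"
  and openin_PF_diff_th: "a \<in> car \<Longrightarrow> openin PT (PF - th a)"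
  unfolding pf_simps by (auto simp: subbasis_def intro: topology_generated_by_Basis)

lemma closedin_th: "a \<in> car \<Longrightarrow> closedin PT (th a)"
  and closedin_PF_diff_th: "a \<in> car \<Longrightarrow> closedin PT (PF - th a)"
  using openin_th openin_PF_diff_th th_subset
  by (auto simp: closedin_def topspace_PT Diff_Diff_Int Int_absorb1)

definition entailed :: "'a set \<Rightarrow> 'a set" where
  "entailed S = {c \<in> car. \<exists>S0. finite S0 \<and> S0 \<subseteq> S \<and>
                    (\<forall>P. prime_filter A P \<and> S0 \<subseteq> P \<longrightarrow> c \<in> P)}"

definition covered :: "'a set \<Rightarrow> 'a set" where
  "covered T = {c \<in> car. \<exists>T0. finite T0 \<and> T0 \<subseteq> T \<and>
                   (\<forall>P. prime_filter A P \<and> c \<in> P \<longrightarrow> T0 \<inter> P \<noteq> {})}"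

lemma is_filter_entailed: "is_filter (entailed S)"
proof (rule is_filterI)
  show "entailed S \<subseteq> car" "tp \<in> entailed S"
    unfolding entailed_def using prime_filterD(2) by auto
  show "b \<in> entailed S" if "a \<in> entailed S" "b \<in> car" "le a b" for a b
    using that prime_filterD(4)[of _ a b] by (auto simp: entailed_def)
  show "mt a b \<in> entailed S" if a: "a \<in> entailed S" and b: "b \<in> entailed S" for a b
  proof -
    obtain S1 where "finite S1" "S1 \<subseteq> S" "\<forall>P. prime_filter A P \<and> S1 \<subseteq> P \<longrightarrow> a \<in> P"
      using a by (auto simp: entailed_def)
    moreover obtain S2 where "finite S2" "S2 \<subseteq> S" "\<forall>P. prime_filter A P \<and> S2 \<subseteq> P \<longrightarrow> b \<in> P"
      using b by (auto simp: entailed_def)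
    moreover have "a \<in> car" "b \<in> car"
      using a b by (auto simp: entailed_def)
    ultimately show ?thesis
      unfolding entailed_def
      by (intro CollectI conjI exI[of _ "S1 \<union> S2"]) (auto simp: prime_filter_mt_iff)
  qed
qed

lemma is_ideal_covered: "is_ideal (covered T)"
proof (rule is_idealI)
  show "covered T \<subseteq> car" "bt \<in> covered T"
    unfolding covered_def using prime_filterD(3) by auto
  show "b \<in> covered T" if a: "a \<in> covered T" and b: "b \<in> car" "le b a" for a b
  proof -
    obtain T0 where T0: "finite T0" "T0 \<subseteq> T" "\<forall>P. prime_filter A P \<and> a \<in> P \<longrightarrow> T0 \<inter> P \<noteq> {}"
      using a by (auto simp: covered_def)
    have "a \<in> car"
      using a by (simp add: covered_def)
    then have "\<forall>P. prime_filter A P \<and> b \<in> P \<longrightarrow> T0 \<inter> P \<noteq> {}"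
      using T0(3) prime_filterD(4)[of _ b a] b(2) by blast
    then show ?thesis
      using T0(1,2) b(1) unfolding covered_def by blast
  qed
  show "jn a b \<in> covered T" if a: "a \<in> covered T" and b: "b \<in> covered T" for a b
  proof -
    obtain T1 where T1: "finite T1" "T1 \<subseteq> T" "\<forall>P. prime_filter A P \<and> a \<in> P \<longrightarrow> T1 \<inter> P \<noteq> {}"
      using a by (auto simp: covered_def)
    obtain T2 where T2: "finite T2" "T2 \<subseteq> T" "\<forall>P. prime_filter A P \<and> b \<in> P \<longrightarrow> T2 \<inter> P \<noteq> {}"
      using b by (auto simp: covered_def)
    have ab: "a \<in> car" "b \<in> car"
      using a b by (auto simp: covered_def)
    have "(T1 \<union> T2) \<inter> P \<noteq> {}" if "prime_filter A P" "jn a b \<in> P" for P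
    proof -
      have "a \<in> P \<or> b \<in> P"
        using prime_filter_jn_iff[OF that(1) ab] that(2) by blast
      then show ?thesis
        using T1(3) T2(3) that(1) by blast
    qed
    then show ?thesis
      using T1(1,2) T2(1,2) ab
        unfolding covered_def by (intro CollectI conjI exI[of _ "T1 \<union> T2"]) auto
  qed
qed

lemma subset_entailed: "S \<subseteq> car \<Longrightarrow> S \<subseteq> entailed S"
  by (auto simp: entailed_def intro!: exI[of _ "{_}"])

lemma subset_covered: "T \<subseteq> car \<Longrightarrow> T \<subseteq> covered T"
  by (auto simp: covered_def intro!: exI[of _ "{_}"])

lemma prime_filter_finite_separation:
  assumes S: "S \<subseteq> car" and T: "T \<subseteq> car"
    and fin: "\<And>S0 T0. finite S0 \<Longrightarrow> S0 \<subseteq> S \<Longrightarrow> finite T0 \<Longrightarrow> T0 \<subseteq> T \<Longrightarrow>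
                \<exists>P. prime_filter A P \<and> S0 \<subseteq> P \<and> P \<inter> T0 = {}"
  shows "\<exists>P. prime_filter A P \<and> S \<subseteq> P \<and> P \<inter> T = {}"
proof -
  have "entailed S \<inter> covered T = {}"
  proof (rule ccontr)
    assume "entailed S \<inter> covered T \<noteq> {}"
    then obtain c S0 T0 where S0: "finite S0" "S0 \<subseteq> S" and T0: "finite T0" "T0 \<subseteq> T"
      and c: "\<forall>P. prime_filter A P \<and> S0 \<subseteq> P \<longrightarrow> c \<in> P"
        "\<forall>P. prime_filter A P \<and> c \<in> P \<longrightarrow> T0 \<inter> P \<noteq> {}"
      by (auto simp: entailed_def covered_def)
    obtain P where "prime_filter A P" "S0 \<subseteq> P" "P \<inter> T0 = {}"
      using fin[OF S0 T0] by blast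
    with c show False
      by auto
  qed
  then obtain P where "prime_filter A P" "entailed S \<subseteq> P" "P \<inter> covered T = {}"
    using prime_filter_theorem[OF is_filter_entailed is_ideal_covered] by blast
  then show ?thesis
    using subset_entailed[OF S] subset_covered[OF T] by (intro exI[of _ P]) auto
qed

lemma compact_PT: "compact_space PT"
proof (rule Alexander_subbase_alt[where U = PF and \<B> = subbasis])
  show "PF \<subseteq> \<Union>subbasis"
    by (simp add: Union_subbasis)
  show "topology (arbitrary union_of
      (finite intersection_of (\<lambda>x. x \<in> subbasis) relative_to PF)) = PT"
    by (simp add: pf_simps topology_generated_by_eq_subbase Union_subbasis)
next
  fix \<C> assume \<C>: "\<C> \<subseteq> subbasis" and cover: "PF \<subseteq> \<Union>\<C>"
  show "\<exists>\<C>'. finite \<C>' \<and> \<C>' \<subseteq> \<C> \<and> PF \<subseteq> \<Union>\<C>'"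
  proof (rule ccontr)
    assume no_finite: "\<not> ?thesis"
    define S where "S = {b \<in> car. PF - th b \<in> \<C>}"
    define T where "T = {a \<in> car. th a \<in> \<C>}"
    have "\<exists>P. prime_filter A P \<and> S0 \<subseteq> P \<and> P \<inter> T0 = {}"
      if "finite S0" "S0 \<subseteq> S" "finite T0" "T0 \<subseteq> T" for S0 T0
    proof -
      let ?\<C>' = "th ` T0 \<union> (\<lambda>b. PF - th b) ` S0"
      have "finite ?\<C>'" "?\<C>' \<subseteq> \<C>"
        using that unfolding S_def T_def by auto
      then have "\<not> PF \<subseteq> \<Union>?\<C>'"
        using no_finite by metis
      then show ?thesis
        by (auto simp: mem_th mem_PF)
    qed
    then obtain P where P: "prime_filter A P" "S \<subseteq> P" "P \<inter> T = {}"
      using prime_filter_finite_separation[of S T] unfolding S_def T_def by blast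
    then obtain W where W: "W \<in> \<C>" "P \<in> W"
      using cover by (auto simp: mem_PF)
    then consider a where "a \<in> car" "W = th a" | b where "b \<in> car" "W = PF - th b"
      using \<C> unfolding subbasis_def by blast
    then show False
    proof cases
      case 1
      then have "a \<in> P \<inter> T" using W by (simp add: T_def mem_th)
      then show False using P(3) by blast
    next
      case 2
      then have "b \<in> P" "b \<notin> P" using W P(1,2) by (auto simp: S_def mem_th)
      then show False by blast
    qed
  qed
qed

lemma Hausdorff_PT: "Hausdorff_space PT"
proof -
  have "\<exists>U V. openin PT U \<and> openin PT V \<and> x \<in> U \<and> y \<in> V \<and> disjnt U V"
    if "x \<in> PF" "y \<in> PF" "a \<in> x" "a \<notin> y" for x y a
  proof -
    have "a \<in> car" using that prime_filterD(1) by (auto simp: mem_PF)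
    then show ?thesis
      using that openin_th openin_PF_diff_th
      by (intro exI[of _ "th a"] exI[of _ "PF - th a"]) (auto simp: mem_th mem_PF disjnt_def)
  qed
  then show ?thesis
    unfolding Hausdorff_space_def topspace_PT by (metis disjnt_sym subsetI subset_antisym)
qed

lemma down_pf: "down (pf A) S = {Q \<in> PF. \<exists>P\<in>S. Q \<subseteq> P}"
  by (simp add: down_def pf_simps)

lemma down_th_diff:
  assumes a: "a \<in> car" and b: "b \<in> car"
  shows "down (pf A) (th a - th b) = PF - th (im a b)"
proof
  show "down (pf A) (th a - th b) \<subseteq> PF - th (im a b)"
  proof
    fix Q assume "Q \<in> down (pf A) (th a - th b)"
    then obtain P where Q: "Q \<in> PF" "Q \<subseteq> P" and P: "prime_filter A P" "a \<in> P" "b \<notin> P"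
      by (auto simp: down_pf mem_th)
    then have "im a b \<notin> P"
      using prime_filter_mp[OF P(1) a b] by blast
    then show "Q \<in> PF - th (im a b)"
      using Q by (auto simp: mem_th)
  qed
next
  show "PF - th (im a b) \<subseteq> down (pf A) (th a - th b)"
  proof
    fix Q assume "Q \<in> PF - th (im a b)"
    then have Q: "prime_filter A Q" and nQ: "im a b \<notin> Q"
      by (auto simp: mem_th mem_PF)
    let ?G = "filter_join Q {c \<in> car. le a c}"
    have filters: "is_filter Q" "is_filter {c \<in> car. le a c}"
      using prime_filter_is_filter[OF Q] is_filter_principal[OF a] .
    have "b \<notin> ?G"
    proof
      assume "b \<in> ?G"
      then obtain m g where m: "m \<in> Q" "g \<in> car" "le a g" "le (mt m g) b"
        unfolding filter_join_def by blast
      have "m \<in> car"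
        using m prime_filterD(1)[OF Q] by blast
      then have "le (mt m a) b"
        using m a b mt_mono[of m a m g] le_refl[of m] le_trans[of "mt m a" "mt m g" b] by simp
      then have "le m (im a b)"
        using le_im_iff[OF a b \<open>m \<in> car\<close>] by simp
      then show False
        using prime_filterD(4)[OF Q m(1)] a b nQ by simp
    qed
    then obtain P where P: "prime_filter A P" "?G \<subseteq> P" "b \<notin> P"
      using prime_filter_avoiding[OF is_filter_filter_join[OF filters] b] by blast
    moreover have "Q \<subseteq> P" "a \<in> P"
      using filter_join_upper[OF filters] P(2) a le_refl[OF a] by blast+
    ultimately show "Q \<in> down (pf A) (th a - th b)"
      using Q by (auto simp: down_pf mem_th mem_PF)
  qed
qed

lemma th_clopen_upset:
  assumes a: "a \<in> car"
  shows "th a \<in> clopen_upsets (pf A)"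
proof -
  have "is_upset (pf A) (th a)"
    unfolding is_upset_def pf_simps
  proof (intro conjI ballI impI)
    show "th a \<subseteq> PF" by (rule th_subset)
    fix x y assume "x \<in> th a" "y \<in> PF" "x \<subseteq> y"
    then show "y \<in> th a" by (auto simp: mem_th mem_PF)
  qed
  then show ?thesis unfolding clopen_upsets_def is_clopen_def
    using openin_th[OF a] closedin_th[OF a] by blast
qed

lemma Union_th_image: "finite K \<Longrightarrow> K \<subseteq> th ` car \<Longrightarrow> \<Union>K \<in> th ` car"
proof (induction K rule: finite_induct)
  case empty
  then show ?case using th_bt bt_in by (metis Sup_empty image_eqI)
next
  case (insert x F)
  then obtain a b where ab: "a \<in> car" "x = th a" "b \<in> car" "\<Union>F = th b" by auto
  then have "\<Union>(insert x F) = th (jn a b)" using th_jn by simp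
  then show ?case using ab by simp
qed

lemma clopen_upsets_pf: "clopen_upsets (pf A) = th ` car"
proof
  show "th ` car \<subseteq> clopen_upsets (pf A)" using th_clopen_upset by blast
next
  show "clopen_upsets (pf A) \<subseteq> th ` car"
  proof
    fix U assume U: "U \<in> clopen_upsets (pf A)"
    then have Uc: "closedin PT U" "openin PT U" and Uup: "is_upset (pf A) U"
      by (auto simp: clopen_upsets_def is_clopen_def)
    have "\<exists>F. finite F \<and> F \<subseteq> th ` car \<and> U = \<Union>F"
    proof (rule clopen_finite_union_of_separating[OF compact_PT Uc])
      show "\<And>W. W \<in> th ` car \<Longrightarrow> closedin PT W \<and> openin PT W" using openin_th closedin_th by blast
      show "topspace PT \<in> th ` car" by (rule image_eqI[of _ _ tp]) (simp_all add: topspace_PT th_tp)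
      show "W1 \<inter> W2 \<in> th ` car" if W12: "W1 \<in> th ` car" "W2 \<in> th ` car" for W1 W2
      proof -
        obtain a b where "a \<in> car" "b \<in> car" "W1 = th a" "W2 = th b" using W12 by blast
        then show ?thesis by (intro image_eqI[of _ _ "mt a b"]) (simp_all add: th_mt)
      qed
    next
      fix P Q assume P: "P \<in> U" and Q: "Q \<in> topspace PT" "Q \<notin> U"
      have "U \<subseteq> PF" using Uup unfolding is_upset_def pf_simps by blast
      then have "P \<in> PF" using P by blast
      have "\<not> P \<subseteq> Q"
      proof
        assume "P \<subseteq> Q"
        moreover have "Q \<in> PF" using Q(1) topspace_PT by simp
        ultimately have "Q \<in> U" using Uup P unfolding is_upset_def pf_simps by blast
        then show False using Q by blast
      qed
      then obtain a where a: "a \<in> P" "a \<notin> Q" by blast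
      have "a \<in> car" using a \<open>P \<in> PF\<close> prime_filterD(1) by (auto simp: mem_PF)
      then show "\<exists>W\<in>th ` car. P \<in> W \<and> Q \<notin> W" using a \<open>P \<in> PF\<close> by (auto simp: mem_th mem_PF)
    qed
    then show "U \<in> th ` car" using Union_th_image by blast
  qed
qed

definition "th_diffs = {th a - th b | a b. a \<in> car \<and> b \<in> car}"

lemma th_diffsI: "a \<in> car \<Longrightarrow> b \<in> car \<Longrightarrow> th a - th b \<in> th_diffs"
  unfolding th_diffs_def by blast

lemma th_diffsE:
  assumes "W \<in> th_diffs"
  obtains a b where "a \<in> car" "b \<in> car" "W = th a - th b"
  using assms unfolding th_diffs_def by blast

lemma th_diffs_separate:
  assumes P: "prime_filter A P" and Q: "prime_filter A Q" and PQ: "P \<noteq> Q"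
  shows "\<exists>W\<in>th_diffs. P \<in> W \<and> Q \<notin> W"
proof (cases "P \<subseteq> Q")
  case True
  then obtain a where "a \<in> Q" "a \<notin> P"
    using PQ by blast
  moreover have "a \<in> car"
    using \<open>a \<in> Q\<close> prime_filterD(1)[OF Q] by blast
  ultimately show ?thesis
    using P Q by (intro bexI[OF _ th_diffsI[of tp a]]) (auto simp: th_tp mem_th mem_PF)
next
  case False
  then obtain a where "a \<in> P" "a \<notin> Q"
    by blast
  moreover have "a \<in> car"
    using \<open>a \<in> P\<close> prime_filterD(1)[OF P] by blast
  ultimately show ?thesis
    using P by (intro bexI[OF _ th_diffsI[of a bt]]) (auto simp: th_bt mem_th)
qed

lemma clopen_finite_union_th_diffs:
  assumes "closedin PT V" "openin PT V"
  shows "\<exists>\<F>. finite \<F> \<and> \<F> \<subseteq> th_diffs \<and> V = \<Union>\<F>"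
proof (rule clopen_finite_union_of_separating[OF compact_PT assms])
  show "closedin PT W \<and> openin PT W" if "W \<in> th_diffs" for W
    using that closedin_diff[OF closedin_th openin_th] openin_diff[OF openin_th closedin_th]
    by (auto elim: th_diffsE)
  show "topspace PT \<in> th_diffs"
    using th_diffsI[of tp bt] by (simp add: topspace_PT th_tp th_bt)
  show "W1 \<inter> W2 \<in> th_diffs" if W1: "W1 \<in> th_diffs" and W2: "W2 \<in> th_diffs" for W1 W2
  proof -
    obtain a b where "a \<in> car" "b \<in> car" "W1 = th a - th b"
      using W1 by (rule th_diffsE)
    moreover obtain c d where "c \<in> car" "d \<in> car" "W2 = th c - th d"
      using W2 by (rule th_diffsE)
    moreover have "(th a - th b) \<inter> (th c - th d) = th (mt a c) - th (jn b d)"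
      using calculation by (auto simp: th_mt th_jn)
    ultimately show ?thesis
      using th_diffsI[of "mt a c" "jn b d"] by simp
  qed
  show "\<exists>W\<in>th_diffs. P \<in> W \<and> Q \<notin> W" if "P \<in> V" "Q \<in> topspace PT" "Q \<notin> V" for P Q
    using that th_diffs_separate openin_subset[OF assms(2)]
    by (metis mem_PF subsetD topspace_PT)
qed

lemma down_clopen:
  assumes "is_clopen (pf A) V"
  shows "is_clopen (pf A) (down (pf A) V)"
proof -
  obtain \<F> where \<F>: "finite \<F>" "\<F> \<subseteq> th_diffs" "V = \<Union>\<F>"
    using assms clopen_finite_union_th_diffs by (auto simp: is_clopen_def)
  have "down (pf A) V = \<Union>(down (pf A) ` \<F>)"
    unfolding \<F>(3) down_def by blast
  moreover have "is_clopen (pf A) (down (pf A) W)" if W: "W \<in> \<F>" for W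
  proof -
    obtain a b where "a \<in> car" "b \<in> car" "W = th a - th b"
      using W \<F>(2) th_diffsE by blast
    then show ?thesis
      using openin_PF_diff_th closedin_PF_diff_th by (simp add: down_th_diff is_clopen_def)
  qed
  ultimately show ?thesis
    using \<F>(1) by (auto simp: is_clopen_def intro!: closedin_Union openin_Union)
qed

end

section \<open>From conditional Heyting algebras to conditional Esakia spaces\<close>

locale CHA = HA +
  assumes cha: "cha A"
begin

abbreviation "cnd \<equiv> hcond A"

lemma cnd_in [simp]: "a \<in> car \<Longrightarrow> b \<in> car \<Longrightarrow> cnd a b \<in> car"
  and cnd_mt: "a \<in> car \<Longrightarrow> b \<in> car \<Longrightarrow> c \<in> car \<Longrightarrow> cnd a (mt b c) = mt (cnd a b) (cnd a c)"
  and cnd_tp: "a \<in> car \<Longrightarrow> cnd a tp = tp"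
  using cha unfolding cha_def by blast+

lemma cnd_mono:
  assumes "a \<in> car" "b \<in> car" "c \<in> car" "le b c"
  shows "le (cnd a b) (cnd a c)"
  using assms cnd_mt[of a b c] mt_le2[of "cnd a b" "cnd a c"] by (simp add: le_iff_mt)

lemma is_filter_cnd:
  assumes x: "prime_filter A x" and a: "a \<in> car"
  shows "is_filter {c \<in> car. cnd a c \<in> x}"
proof (rule is_filterI)
  show "{c \<in> car. cnd a c \<in> x} \<subseteq> car" "tp \<in> {c \<in> car. cnd a c \<in> x}"
    using cnd_tp[OF a] prime_filterD(2)[OF x] by auto
  show "c \<in> {c \<in> car. cnd a c \<in> x}" if "b \<in> {c \<in> car. cnd a c \<in> x}" "c \<in> car" "le b c" for b c
    using that cnd_mono[OF a, of b c] prime_filterD(4)[OF x, of "cnd a b" "cnd a c"] a by simp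
  show "mt b c \<in> {c \<in> car. cnd a c \<in> x}"
    if "b \<in> {c \<in> car. cnd a c \<in> x}" "c \<in> {c \<in> car. cnd a c \<in> x}" for b c
    using that cnd_mt[OF a, of b c] prime_filterD(5)[OF x] by simp
qed

lemma cha_iso_if_bij:
  assumes h: "cha_hom A B h" and bij: "bij_betw h car (hcarrier B)"
  shows "cha_iso A B h"
  unfolding cha_iso_def
proof (intro conjI exI[of _ "inv_into car h"] h ballI)
  let ?g = "inv_into car h"
  have gh: "?g (h a) = a" if "a \<in> car" for a
    using bij that by (simp add: bij_betw_inv_into_left)
  have hg: "?g b \<in> car" "h (?g b) = b" if "b \<in> hcarrier B" for b
    using bij that by (auto simp: bij_betw_def inv_into_into f_inv_into_f)
  show "?g (h a) = a" if "a \<in> car" for a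
    using gh[OF that] .
  show "h (?g b) = b" if "b \<in> hcarrier B" for b
    using hg(2)[OF that] .
  have hom: "h (htop A) = htop B" "h (hbot A) = hbot B"
    "\<And>a b. a \<in> car \<Longrightarrow> b \<in> car \<Longrightarrow> h (mt a b) = hmeet B (h a) (h b) \<and> h (jn a b) = hjoin B (h a) (h b) \<and>
       h (im a b) = himp B (h a) (h b) \<and> h (cnd a b) = hcond B (h a) (h b)"
    using h unfolding cha_hom_def by blast+
  show "cha_hom B A ?g"
    unfolding cha_hom_def
  proof (intro conjI ballI)
    show "?g \<in> hcarrier B \<rightarrow> car"
      using hg(1) by blast
    show "?g (htop B) = tp" "?g (hbot B) = bt"
      using gh hom(1,2) by (metis tp_in, metis bt_in)
    fix u v assume "u \<in> hcarrier B" "v \<in> hcarrier B"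
    then obtain a b where ab: "a \<in> car" "b \<in> car" "u = h a" "v = h b"
      using hg by metis
    show "?g (hmeet B u v) = mt (?g u) (?g v)" "?g (hjoin B u v) = jn (?g u) (?g v)"
      "?g (himp B u v) = im (?g u) (?g v)" "?g (hcond B u v) = cnd (?g u) (?g v)"
      using hom(3)[OF ab(1,2)] gh ab by (metis mt_in, metis jn_in, metis im_in, metis cnd_in)
  qed
qed

lemma rel_pf_iff: "rel (pf A) S x y \<longleftrightarrow> prime_filter A x \<and> prime_filter A y \<and>
   (\<exists>a\<in>car. S = th a \<and> {b \<in> car. cnd a b \<in> x} \<subseteq> y)"
  by (simp add: pf_def)

lemma rel_pf_th:
  assumes a: "a \<in> car"
  shows "rel (pf A) (th a) x y \<longleftrightarrow> prime_filter A x \<and> prime_filter A y \<and> {b \<in> car. cnd a b \<in> x} \<subseteq> y"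
proof
  assume "rel (pf A) (th a) x y"
  then obtain a' where "prime_filter A x" "prime_filter A y" "a' \<in> car" "th a = th a'"
    "{b \<in> car. cnd a' b \<in> x} \<subseteq> y" unfolding rel_pf_iff by blast
  moreover have "a = a'" using inj_on_th a calculation by (auto dest: inj_onD)
  ultimately show "prime_filter A x \<and> prime_filter A y \<and> {b \<in> car. cnd a b \<in> x} \<subseteq> y" by blast
next
  assume "prime_filter A x \<and> prime_filter A y \<and> {b \<in> car. cnd a b \<in> x} \<subseteq> y"
  then show "rel (pf A) (th a) x y" unfolding rel_pf_iff using a by blast
qed

lemma ccond_pf_th:
  assumes a: "a \<in> car" and b: "b \<in> car"
  shows "ccond (pf A) (th a) (th b) = th (cnd a b)"
proof
  show "ccond (pf A) (th a) (th b) \<subseteq> th (cnd a b)"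
  proof
    fix x assume x: "x \<in> ccond (pf A) (th a) (th b)"
    then have px: "prime_filter A x" and R: "\<And>y. rel (pf A) (th a) x y \<Longrightarrow> y \<in> th b"
      unfolding ccond_def by (auto simp: pf_simps mem_PF)
    have "cnd a b \<in> x"
    proof (rule ccontr)
      assume nb: "cnd a b \<notin> x"
      have "b \<notin> {c \<in> car. cnd a c \<in> x}" using nb by blast
      then obtain P where P: "prime_filter A P" "{c \<in> car. cnd a c \<in> x} \<subseteq> P" "b \<notin> P"
        using prime_filter_avoiding[OF is_filter_cnd[OF px a] b] by blast
      have "rel (pf A) (th a) x P" using rel_pf_th[OF a] px P by blast
      then have "P \<in> th b" by (rule R)
      then show False using P(3) by (simp add: mem_th)
    qed
    then show "x \<in> th (cnd a b)" using px by (simp add: mem_th)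
  qed
next
  show "th (cnd a b) \<subseteq> ccond (pf A) (th a) (th b)"
  proof
    fix x assume x: "x \<in> th (cnd a b)"
    then have px: "prime_filter A x" and cx: "cnd a b \<in> x" by (auto simp: mem_th)
    have "y \<in> th b" if "rel (pf A) (th a) x y" for y
    proof -
      have "prime_filter A y" "{c \<in> car. cnd a c \<in> x} \<subseteq> y" using that rel_pf_th[OF a] by blast+
      then show ?thesis using cx b by (auto simp: mem_th)
    qed
    then show "x \<in> ccond (pf A) (th a) (th b)" unfolding ccond_def
      using px by (auto simp: pf_simps mem_PF)
  qed
qed

lemma Collect_rel_pf_th:
  assumes a: "a \<in> car" and x: "prime_filter A x"
  shows "{y. rel (pf A) (th a) x y} = \<Inter>(th ` {c \<in> car. cnd a c \<in> x})"
proof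
  show "{y. rel (pf A) (th a) x y} \<subseteq> \<Inter>(th ` {c \<in> car. cnd a c \<in> x})"
    using rel_pf_th[OF a] by (auto simp: mem_th)
next
  show "\<Inter>(th ` {c \<in> car. cnd a c \<in> x}) \<subseteq> {y. rel (pf A) (th a) x y}"
  proof
    fix y assume y: "y \<in> \<Inter>(th ` {c \<in> car. cnd a c \<in> x})"
    have "tp \<in> {c \<in> car. cnd a c \<in> x}" using cnd_tp[OF a] prime_filterD(2)[OF x] by simp
    then have "y \<in> th tp" using y by blast
    then have py: "prime_filter A y" by (simp add: mem_th)
    have "{c \<in> car. cnd a c \<in> x} \<subseteq> y" using y by (auto simp: mem_th)
    then show "y \<in> {y. rel (pf A) (th a) x y}" using rel_pf_th[OF a] x py by blast
  qed
qed

lemma closedin_rel_pf_th: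
  assumes a: "a \<in> car" and x: "prime_filter A x"
  shows "closedin PT {y. rel (pf A) (th a) x y}"
proof -
  have "tp \<in> {c \<in> car. cnd a c \<in> x}" using cnd_tp[OF a] prime_filterD(2)[OF x] by simp
  then have ne: "th ` {c \<in> car. cnd a c \<in> x} \<noteq> {}" by blast
  show ?thesis
    unfolding Collect_rel_pf_th[OF a x] by (rule closedin_Inter[OF ne]) (auto intro: closedin_th)
qed

lemma esakia_space_pf: "esakia_space (pf A)"
  unfolding esakia_space_def pf_simps(1,2)
proof (intro conjI ballI impI allI)
  show "topspace PT = PF" "compact_space PT"
    by (rule topspace_PT, rule compact_PT)
  show "PF \<noteq> {}"
    using prime_filter_exists by (auto simp: mem_PF)
  show "x \<subseteq> x" "x \<subseteq> y \<and> y \<subseteq> x \<Longrightarrow> x = y" "x \<subseteq> y \<and> y \<subseteq> z \<Longrightarrow> x \<subseteq> z" for x y z :: "'a set"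
    by auto
  show "is_clopen (pf A) U \<Longrightarrow> is_clopen (pf A) (down (pf A) U)" for U
    by (rule down_clopen)
  fix x y assume "x \<in> PF" "y \<in> PF" "\<not> x \<subseteq> y"
  then obtain a where "a \<in> car" "a \<in> x" "a \<notin> y"
    using prime_filterD(1) by (auto simp: mem_PF)
  then show "\<exists>U\<in>clopen_upsets (pf A). x \<in> U \<and> y \<notin> U"
    using \<open>x \<in> PF\<close> \<open>y \<in> PF\<close>
    by (intro bexI[OF _ th_clopen_upset[of a]]) (auto simp: mem_th mem_PF)
qed

lemma rel_pf_th_mono:
  assumes "a \<in> car" "x \<in> PF" "y \<in> PF" "x \<subseteq> x'" "rel (pf A) (th a) x' y'" "y' \<subseteq> y"
  shows "rel (pf A) (th a) x y"
  using assms rel_pf_th[of a] by (auto simp: mem_PF)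

lemma ces_pf: "ces (pf A)"
  unfolding ces_def pf_simps(1,2)
proof (intro conjI ballI allI impI iffI esakia_space_pf)
  fix U x y assume "U \<in> clopen_upsets (pf A)" "rel (pf A) U x y"
  then show "x \<in> PF" "y \<in> PF"
    by (auto simp: rel_pf_iff mem_PF)
next
  fix U V assume "U \<in> clopen_upsets (pf A)" "V \<in> clopen_upsets (pf A)"
  then obtain a b where "a \<in> car" "b \<in> car" "U = th a" "V = th b"
    by (auto simp: clopen_upsets_pf)
  then show "is_clopen (pf A) (ccond (pf A) U V)"
    using th_clopen_upset[of "cnd a b"] by (simp add: ccond_pf_th clopen_upsets_def)
next
  fix U x y assume "U \<in> clopen_upsets (pf A)" "x \<in> PF" "y \<in> PF"
    and "\<exists>x'\<in>PF. \<exists>y'\<in>PF. x \<subseteq> x' \<and> rel (pf A) U x' y' \<and> y' \<subseteq> y"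
  then show "rel (pf A) U x y"
    using rel_pf_th_mono by (auto simp: clopen_upsets_pf)
next
  fix U x y assume "U \<in> clopen_upsets (pf A)" "x \<in> PF" "y \<in> PF" "rel (pf A) U x y"
  then show "\<exists>x'\<in>PF. \<exists>y'\<in>PF. x \<subseteq> x' \<and> rel (pf A) U x' y' \<and> y' \<subseteq> y"
    by blast
next
  fix U x assume "U \<in> clopen_upsets (pf A)" "x \<in> PF"
  then show "closedin PT {y. rel (pf A) U x y}"
    using closedin_rel_pf_th by (auto simp: clopen_upsets_pf mem_PF)
qed

lemma th_im:
  assumes a: "a \<in> car" and b: "b \<in> car"
  shows "th (im a b) = PF - down (pf A) (th a - th b)"
  using down_th_diff[OF a b] th_subset by auto

lemma clpup_pf:
  "hcarrier (clpup (pf A)) = th ` car" "htop (clpup (pf A)) = PF" "hbot (clpup (pf A)) = {}"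
  "hmeet (clpup (pf A)) = (\<inter>)" "hjoin (clpup (pf A)) = (\<union>)"
  "himp (clpup (pf A)) = (\<lambda>a b. PF - down (pf A) (a - b))" "hcond (clpup (pf A)) = ccond (pf A)"
  by (simp_all add: clpup_def clopen_upsets_pf pf_simps(1))

lemma cha_hom_theta: "cha_hom A (clpup (pf A)) th"
  unfolding cha_hom_def clpup_pf
proof (intro conjI ballI)
  show "th \<in> car \<rightarrow> th ` car" by blast
  show "th tp = PF" by (rule th_tp)
  show "th bt = {}" by (rule th_bt)
  fix a b assume a: "a \<in> car" and b: "b \<in> car"
  show "th (mt a b) = th a \<inter> th b" using th_mt[OF a b] .
  show "th (jn a b) = th a \<union> th b" using th_jn[OF a b] .
  show "th (im a b) = PF - down (pf A) (th a - th b)" using th_im[OF a b] .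
  show "th (cnd a b) = ccond (pf A) (th a) (th b)" using ccond_pf_th[OF a b] by simp
qed

lemma cha_iso_theta: "cha_iso A (clpup (pf A)) th"
  using cha_iso_if_bij[OF cha_hom_theta] inj_on_th by (simp add: bij_betw_def clpup_pf)

end

locale CHA_hom = A: CHA A + B: CHA B for A :: "'a cha_sig" and B :: "'b cha_sig" +
  fixes h :: "'a \<Rightarrow> 'b"
  assumes hom: "cha_hom A B h"
begin

lemma h_in [simp]: "a \<in> A.car \<Longrightarrow> h a \<in> B.car"
  using hom unfolding cha_hom_def by blast

lemma h_tp: "h A.tp = B.tp" and h_bt: "h A.bt = B.bt"
  using hom unfolding cha_hom_def by blast+

lemma h_ops:
  assumes "a \<in> A.car" "b \<in> A.car"
  shows "h (A.mt a b) = B.mt (h a) (h b)" "h (A.jn a b) = B.jn (h a) (h b)"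
    "h (A.im a b) = B.im (h a) (h b)" "h (A.cnd a b) = B.cnd (h a) (h b)"
  using hom assms unfolding cha_hom_def by blast+

lemma h_le: "a \<in> A.car \<Longrightarrow> b \<in> A.car \<Longrightarrow> A.le a b \<Longrightarrow> B.le (h a) (h b)"
  using h_ops(1) by (metis hle_def)

abbreviation "pfm \<equiv> pf_mor A h"

lemma pfm_mem: "a \<in> pfm q \<longleftrightarrow> a \<in> A.car \<and> h a \<in> q"
  by (simp add: pf_mor_def)

lemma prime_filter_pfm:
  assumes q: "prime_filter B q"
  shows "prime_filter A (pfm q)"
  unfolding prime_filter_def
proof (intro conjI ballI impI)
  show "pfm q \<subseteq> A.car" by (auto simp: pfm_mem)
  show "A.tp \<in> pfm q" using B.prime_filterD(2)[OF q] by (simp add: pfm_mem h_tp)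
  show "A.bt \<notin> pfm q" using B.prime_filterD(3)[OF q] by (simp add: pfm_mem h_bt)
next
  fix a b assume a: "a \<in> pfm q" and b: "b \<in> A.car" and ab: "A.le a b"
  have "B.le (h a) (h b)" using h_le[OF _ b ab] a by (simp add: pfm_mem)
  then have "h b \<in> q" using B.prime_filterD(4)[OF q, of "h a" "h b"] a b by (simp add: pfm_mem)
  then show "b \<in> pfm q" using b by (simp add: pfm_mem)
next
  fix a b assume a: "a \<in> pfm q" and b: "b \<in> pfm q"
  have "h (A.mt a b) \<in> q" using h_ops(1) a b B.prime_filterD(5)[OF q] by (simp add: pfm_mem)
  then show "A.mt a b \<in> pfm q" using a b by (simp add: pfm_mem)
next
  fix a b assume a: "a \<in> A.car" and b: "b \<in> A.car" and ab: "A.jn a b \<in> pfm q"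
  have "B.jn (h a) (h b) \<in> q" using ab h_ops(2)[OF a b] by (simp add: pfm_mem)
  then have "h a \<in> q \<or> h b \<in> q" using B.prime_filterD(6)[OF q] a b by simp
  then show "a \<in> pfm q \<or> b \<in> pfm q" using a b by (simp add: pfm_mem)
qed

lemma pfm_preimage_th:
  assumes a: "a \<in> A.car"
  shows "{q \<in> B.PF. pfm q \<in> A.th a} = B.th (h a)"
proof
  show "{q \<in> B.PF. pfm q \<in> A.th a} \<subseteq> B.th (h a)"
    by (auto simp: A.mem_th B.mem_th B.mem_PF pfm_mem)
  show "B.th (h a) \<subseteq> {q \<in> B.PF. pfm q \<in> A.th a}"
    using prime_filter_pfm a by (auto simp: A.mem_th B.mem_th B.mem_PF pfm_mem)
qed

lemma pfm_preimage_PF_diff_th: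
  assumes a: "a \<in> A.car"
  shows "{q \<in> B.PF. pfm q \<in> A.PF - A.th a} = B.PF - B.th (h a)"
  using pfm_preimage_th[OF a] prime_filter_pfm by (auto simp: A.mem_PF B.mem_PF)

definition "compl_ideal z' = {c \<in> B.car. \<exists>e\<in>A.car. e \<notin> z' \<and> B.le c (h e)}"

lemma is_ideal_compl_ideal:
  assumes z: "prime_filter A z'"
  shows "B.is_ideal (compl_ideal z')"
proof (rule B.is_idealI)
  show "compl_ideal z' \<subseteq> B.car" unfolding compl_ideal_def by blast
  have "B.le B.bt (h A.bt)" using h_bt B.le_refl by simp
  then show "B.bt \<in> compl_ideal z'" unfolding compl_ideal_def
    using A.prime_filterD(3)[OF z] A.bt_in B.bt_in by blast
next
  fix a b assume a: "a \<in> compl_ideal z'" and b: "b \<in> B.car" and ba: "B.le b a"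
  then obtain e where e: "e \<in> A.car" "e \<notin> z'" "B.le a (h e)" "a \<in> B.car"
    unfolding compl_ideal_def by blast
  have "B.le b (h e)" using B.le_trans[OF b e(4) h_in[OF e(1)] ba e(3)] .
  then show "b \<in> compl_ideal z'" unfolding compl_ideal_def using e b by blast
next
  fix a b assume a: "a \<in> compl_ideal z'" and b: "b \<in> compl_ideal z'"
  obtain e where e: "e \<in> A.car" "e \<notin> z'" "B.le a (h e)" "a \<in> B.car"
    using a unfolding compl_ideal_def by blast
  obtain f where f: "f \<in> A.car" "f \<notin> z'" "B.le b (h f)" "b \<in> B.car"
    using b unfolding compl_ideal_def by blast
  have "B.le (B.jn a b) (B.jn (h e) (h f))" using B.jn_mono e f by simp
  then have "B.le (B.jn a b) (h (A.jn e f))" using h_ops(2)[OF e(1) f(1)] by simp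
  moreover have "A.jn e f \<notin> z'" using A.prime_filter_jn_iff[OF z e(1) f(1)] e f by simp
  ultimately show "B.jn a b \<in> compl_ideal z'" unfolding compl_ideal_def
    using e f A.jn_in B.jn_in by blast
qed

lemma h_in_compl_ideal: "d \<in> A.car \<Longrightarrow> d \<notin> z' \<Longrightarrow> h d \<in> compl_ideal z'"
  unfolding compl_ideal_def using B.le_refl h_in by blast

lemma pfm_subset_if_disjoint:
  assumes z: "prime_filter A z'" and Z: "Z \<inter> compl_ideal z' = {}"
  shows "pfm Z \<subseteq> z'"
proof
  fix d assume "d \<in> pfm Z"
  then have d: "d \<in> A.car" "h d \<in> Z" by (auto simp: pfm_mem)
  show "d \<in> z'"
  proof (rule ccontr)
    assume "d \<notin> z'"
    then have "h d \<in> compl_ideal z'" using h_in_compl_ideal[OF d(1)] by blast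
    then show False using d Z by blast
  qed
qed

lemma is_filter_up_image:
  assumes z: "prime_filter A z'"
  shows "B.is_filter {c \<in> B.car. \<exists>d\<in>z'. B.le (h d) c}"
proof (rule B.is_filterI)
  have zc: "z' \<subseteq> A.car"
    using A.prime_filterD(1)[OF z] .
  show "{c \<in> B.car. \<exists>d\<in>z'. B.le (h d) c} \<subseteq> B.car" by blast
  show "B.tp \<in> {c \<in> B.car. \<exists>d\<in>z'. B.le (h d) c}"
    using A.prime_filterD(2)[OF z] h_tp B.le_refl by force
  show "c \<in> {c \<in> B.car. \<exists>d\<in>z'. B.le (h d) c}"
    if b: "b \<in> {c \<in> B.car. \<exists>d\<in>z'. B.le (h d) c}" and c: "c \<in> B.car" "B.le b c" for b c
  proof -
    obtain d where "d \<in> z'" "B.le (h d) b" "b \<in> B.car"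
      using b by blast
    then have "B.le (h d) c"
      using zc c B.le_trans[of "h d" b c] by auto
    then show ?thesis
      using \<open>d \<in> z'\<close> c by blast
  qed
  show "B.mt b c \<in> {c \<in> B.car. \<exists>d\<in>z'. B.le (h d) c}"
    if b: "b \<in> {c \<in> B.car. \<exists>d\<in>z'. B.le (h d) c}"
      and c: "c \<in> {c \<in> B.car. \<exists>d\<in>z'. B.le (h d) c}" for b c
  proof -
    obtain d e where "d \<in> z'" "e \<in> z'" "B.le (h d) b" "B.le (h e) c" "b \<in> B.car" "c \<in> B.car"
      using b c by blast
    moreover have "d \<in> A.car" "e \<in> A.car"
      using calculation zc by blast+
    ultimately show ?thesis
      using A.prime_filterD(5)[OF z] B.mt_mono[of "h d" "h e" b c] h_ops(1) by force
  qed
qed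

text \<open>Extend \<open>x\<close> by the image of \<open>z'\<close> while avoiding the image of its complement; the two
  could only meet if \<open>x\<close> contained some \<open>h (d \<rightarrow> e)\<close> with \<open>d \<in> z'\<close> and \<open>e \<notin> z'\<close>.\<close>

lemma pfm_bounded:
  assumes x: "prime_filter B x" and z: "prime_filter A z'" and sub: "pfm x \<subseteq> z'"
  shows "\<exists>w. prime_filter B w \<and> x \<subseteq> w \<and> pfm w = z'"
proof -
  let ?G = "{c \<in> B.car. \<exists>d\<in>z'. B.le (h d) c}"
  let ?F = "B.filter_join x ?G"
  have filters: "B.is_filter x" "B.is_filter ?G"
    using B.prime_filter_is_filter[OF x] is_filter_up_image[OF z] .
  have zc: "z' \<subseteq> A.car"
    using A.prime_filterD(1)[OF z] .
  have "?F \<inter> compl_ideal z' = {}"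
  proof (rule ccontr)
    assume "?F \<inter> compl_ideal z' \<noteq> {}"
    then obtain q g d e c where qg: "q \<in> x" "g \<in> B.car" "d \<in> z'" "B.le (h d) g"
      and c: "c \<in> B.car" "B.le (B.mt q g) c" "B.le c (h e)" and e: "e \<in> A.car" "e \<notin> z'"
      unfolding B.filter_join_def compl_ideal_def by blast
    have q: "q \<in> B.car" "d \<in> A.car"
      using qg B.prime_filterD(1)[OF x] zc by blast+
    have "B.le (B.mt q (h d)) (B.mt q g)"
      using q qg B.mt_mono B.le_refl by simp
    then have "B.le (B.mt q (h d)) (h e)"
      using q qg c e B.le_trans[of "B.mt q (h d)" "B.mt q g" c]
        B.le_trans[of "B.mt q (h d)" c "h e"] by simp
    then have "B.le q (h (A.im d e))"
      using B.le_im_iff q e h_ops(3) by simp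
    then have "A.im d e \<in> z'"
      using B.prime_filterD(4)[OF x qg(1)] q e sub by (auto simp: pfm_mem)
    then show False
      using A.prime_filter_mp[OF z q(2) e(1) _ qg(3)] e(2) by blast
  qed
  then obtain w where w: "prime_filter B w" "?F \<subseteq> w" "w \<inter> compl_ideal z' = {}"
    using B.prime_filter_theorem[OF B.is_filter_filter_join[OF filters] is_ideal_compl_ideal[OF z]]
    by blast
  have "x \<subseteq> w" "?G \<subseteq> w"
    using B.filter_join_upper[OF filters] w(2) by blast+
  moreover have "z' \<subseteq> pfm w"
  proof
    fix d assume "d \<in> z'"
    then have "h d \<in> ?G"
      using zc B.le_refl[of "h d"] by (intro CollectI conjI bexI[of _ d]) auto
    then show "d \<in> pfm w"
      using \<open>?G \<subseteq> w\<close> \<open>d \<in> z'\<close> zc by (auto simp: pfm_mem)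
  qed
  ultimately show ?thesis
    using w(1) pfm_subset_if_disjoint[OF z w(3)] by blast
qed

lemma pfm_rel_forth:
  assumes a: "a \<in> A.car" and r: "rel (pf B) (B.th (h a)) x y"
  shows "rel (pf A) (A.th a) (pfm x) (pfm y)"
proof -
  have x: "prime_filter B x" and y: "prime_filter B y" and R: "{b \<in> B.car. B.cnd (h a) b \<in> x} \<subseteq> y"
    using r B.rel_pf_th[OF h_in[OF a]] by blast+
  have "{b \<in> A.car. A.cnd a b \<in> pfm x} \<subseteq> pfm y"
  proof
    fix b assume b: "b \<in> {b \<in> A.car. A.cnd a b \<in> pfm x}"
    then have "B.cnd (h a) (h b) \<in> x" using h_ops(4)[OF a] by (auto simp: pfm_mem)
    then have "h b \<in> y" using R b by auto
    then show "b \<in> pfm y" using b by (simp add: pfm_mem)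
  qed
  then show ?thesis using A.rel_pf_th[OF a] prime_filter_pfm[OF x] prime_filter_pfm[OF y] by blast
qed

lemma pfm_rel_back:
  assumes a: "a \<in> A.car" and x: "prime_filter B x" and r: "rel (pf A) (A.th a) (pfm x) z'"
  shows "\<exists>w. prime_filter B w \<and> rel (pf B) (B.th (h a)) x w \<and> pfm w \<subseteq> z'"
proof -
  have z: "prime_filter A z'" and R: "{b \<in> A.car. A.cnd a b \<in> pfm x} \<subseteq> z'"
    using r A.rel_pf_th[OF a] by blast+
  let ?G = "{c \<in> B.car. B.cnd (h a) c \<in> x}"
  have G: "B.is_filter ?G" using B.is_filter_cnd[OF x h_in[OF a]] .
  have disj: "?G \<inter> compl_ideal z' = {}"
  proof (rule ccontr)
    assume "?G \<inter> compl_ideal z' \<noteq> {}"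
    then obtain c where c1: "c \<in> ?G" "c \<in> compl_ideal z'" by blast
    obtain e where e: "e \<in> A.car" "e \<notin> z'" "B.le c (h e)"
      using c1(2) unfolding compl_ideal_def by blast
    have "B.le (B.cnd (h a) c) (B.cnd (h a) (h e))"
      using B.cnd_mono[OF h_in[OF a] _ h_in[OF e(1)] e(3)] c1 by blast
    then have "B.le (B.cnd (h a) c) (h (A.cnd a e))" using h_ops(4)[OF a e(1)] by simp
    then have "h (A.cnd a e) \<in> x" using B.prime_filterD(4)[OF x, of "B.cnd (h a) c"] c1 a e by simp
    then have "e \<in> z'" using R e a by (auto simp: pfm_mem)
    then show False using e by blast
  qed
  obtain w where w: "prime_filter B w" "?G \<subseteq> w" "w \<inter> compl_ideal z' = {}"
    using B.prime_filter_theorem[OF G is_ideal_compl_ideal[OF z] disj] by blast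
  have "rel (pf B) (B.th (h a)) x w" using B.rel_pf_th[OF h_in[OF a]] x w by blast
  moreover have "pfm w \<subseteq> z'" using pfm_subset_if_disjoint[OF z w(3)] .
  ultimately show ?thesis using w(1) by blast
qed

lemma continuous_map_pfm: "continuous_map (topo (pf B)) (topo (pf A)) pfm"
proof -
  have "continuous_map (topo (pf B)) (topology_generated_by A.subbasis) pfm"
  proof (rule continuous_on_generated_topo)
    fix U assume "U \<in> A.subbasis"
    then consider a where "a \<in> A.car" "U = A.th a" | a where "a \<in> A.car" "U = A.PF - A.th a"
      unfolding A.subbasis_def by blast
    then show "openin (topo (pf B)) (pfm -` U \<inter> topspace (topo (pf B)))"
    proof cases
      case 1
      have "pfm -` U \<inter> topspace (topo (pf B)) = {q \<in> B.PF. pfm q \<in> A.th a}"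
        unfolding 1 B.topspace_PT by blast
      then show ?thesis using pfm_preimage_th[OF 1(1)] B.openin_th[OF h_in[OF 1(1)]] by simp
    next
      case 2
      have "pfm -` U \<inter> topspace (topo (pf B)) = {q \<in> B.PF. pfm q \<in> A.PF - A.th a}"
        unfolding 2 B.topspace_PT by blast
      then show ?thesis
        using pfm_preimage_PF_diff_th[OF 2(1)] B.openin_PF_diff_th[OF h_in[OF 2(1)]] by simp
    qed
  next
    have "\<Union>A.subbasis = A.PF" using A.topspace_PT by (simp add: A.pf_simps)
    then show "pfm ` topspace (topo (pf B)) \<subseteq> \<Union>A.subbasis"
      using prime_filter_pfm unfolding B.topspace_PT by (auto simp: A.mem_PF B.mem_PF)
  qed
  then show ?thesis by (simp add: A.pf_simps)
qed

lemma ces_morph_pfm: "ces_morph (pf B) (pf A) pfm"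
  unfolding ces_morph_def A.pf_simps(1,2) B.pf_simps(1,2)
proof (intro conjI ballI impI)
  show "pfm \<in> B.PF \<rightarrow> A.PF"
    using prime_filter_pfm by (auto simp: A.mem_PF B.mem_PF)
  show "continuous_map (topo (pf B)) (topo (pf A)) pfm"
    by (rule continuous_map_pfm)
next
  fix x y :: "'b set" assume "x \<subseteq> y"
  then show "pfm x \<subseteq> pfm y"
    by (auto simp: pfm_mem)
next
  fix x z' assume "x \<in> B.PF" "z' \<in> A.PF" "pfm x \<subseteq> z'"
  then obtain w where "prime_filter B w" "x \<subseteq> w" "pfm w = z'"
    using pfm_bounded[of x z'] by (auto simp: A.mem_PF B.mem_PF)
  then show "\<exists>z\<in>B.PF. x \<subseteq> z \<and> pfm z = z'"
    by (auto simp: B.mem_PF)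
next
  fix a' x y assume a': "a' \<in> clopen_upsets (pf A)" and r: "rel (pf B) {u \<in> B.PF. pfm u \<in> a'} x y"
  obtain a where a: "a \<in> A.car" "a' = A.th a"
    using a' by (auto simp: A.clopen_upsets_pf)
  show "rel (pf A) a' (pfm x) (pfm y)"
    using pfm_rel_forth[OF a(1)] r unfolding a(2) pfm_preimage_th[OF a(1)] .
next
  fix a' x z' assume "a' \<in> clopen_upsets (pf A)" "x \<in> B.PF" "rel (pf A) a' (pfm x) z'"
  then obtain a where a: "a \<in> A.car" "a' = A.th a" and x: "prime_filter B x"
    by (auto simp: A.clopen_upsets_pf B.mem_PF)
  then obtain w where "prime_filter B w" "rel (pf B) (B.th (h a)) x w" "pfm w \<subseteq> z'"
    using pfm_rel_back \<open>rel (pf A) a' (pfm x) z'\<close> by blast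
  then show "\<exists>z\<in>B.PF. rel (pf B) {u \<in> B.PF. pfm u \<in> a'} x z \<and> pfm z \<subseteq> z'"
    unfolding a(2) pfm_preimage_th[OF a(1)] by (auto simp: B.mem_PF)
qed

lemma clpup_mor_pfm_theta: "a \<in> A.car \<Longrightarrow> clpup_mor (pf B) pfm (A.th a) = B.th (h a)"
  using pfm_preimage_th by (simp add: clpup_mor_def B.pf_simps)

end

section \<open>From conditional Esakia spaces to conditional Heyting algebras\<close>

locale CES =
  fixes X :: "'x ces_sig"
  assumes cesX: "ces X"
begin

abbreviation "Pt \<equiv> pts X"
abbreviation "lq \<equiv> leq X"
abbreviation "Tx \<equiv> topo X"
abbreviation "CU \<equiv> clopen_upsets X"

lemma esakia: "esakia_space X"
  using cesX unfolding ces_def by blast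

lemma topspace_Tx: "topspace Tx = Pt"
  and Pt_ne: "Pt \<noteq> {}"
  and compact_Tx: "compact_space Tx"
  and lq_refl: "x \<in> Pt \<Longrightarrow> lq x x"
  and lq_antisym: "x \<in> Pt \<Longrightarrow> y \<in> Pt \<Longrightarrow> lq x y \<Longrightarrow> lq y x \<Longrightarrow> x = y"
  and lq_trans: "x \<in> Pt \<Longrightarrow> y \<in> Pt \<Longrightarrow> z \<in> Pt \<Longrightarrow> lq x y \<Longrightarrow> lq y z \<Longrightarrow> lq x z"
  and clopen_upset_separation: "x \<in> Pt \<Longrightarrow> y \<in> Pt \<Longrightarrow> \<not> lq x y \<Longrightarrow> \<exists>U\<in>CU. x \<in> U \<and> y \<notin> U"
  and is_clopen_down: "is_clopen X U \<Longrightarrow> is_clopen X (down X U)"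
  using esakia unfolding esakia_space_def by blast+

lemma rel_in_Pt: "a \<in> CU \<Longrightarrow> rel X a x y \<Longrightarrow> x \<in> Pt \<and> y \<in> Pt"
  and is_clopen_ccond: "a \<in> CU \<Longrightarrow> b \<in> CU \<Longrightarrow> is_clopen X (ccond X a b)"
  and rel_iff_sandwich: "a \<in> CU \<Longrightarrow> x \<in> Pt \<Longrightarrow> y \<in> Pt \<Longrightarrow>
     (\<exists>x'\<in>Pt. \<exists>y'\<in>Pt. lq x x' \<and> rel X a x' y' \<and> lq y' y) \<longleftrightarrow> rel X a x y"
  and closedin_rel: "a \<in> CU \<Longrightarrow> x \<in> Pt \<Longrightarrow> closedin Tx {y. rel X a x y}"
  using cesX unfolding ces_def by blast+

lemma rel_le_left:
  assumes a: "a \<in> CU" and xy: "x \<in> Pt" "y \<in> Pt" and le: "lq x y" and r: "rel X a y z"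
  shows "rel X a x z"
proof -
  have z: "z \<in> Pt" using rel_in_Pt[OF a r] by blast
  have "\<exists>x'\<in>Pt. \<exists>y'\<in>Pt. lq x x' \<and> rel X a x' y' \<and> lq y' z" using xy z le r lq_refl by blast
  then show ?thesis using rel_iff_sandwich[OF a xy(1) z] by blast
qed

lemma rel_le_right:
  assumes a: "a \<in> CU"
    and x: "x \<in> Pt"
    and r: "rel X a x z"
    and zw: "lq z w"
    and w: "w \<in> Pt"
  shows "rel X a x w"
proof -
  have z: "z \<in> Pt" using rel_in_Pt[OF a r] by blast
  have "\<exists>x'\<in>Pt. \<exists>y'\<in>Pt. lq x x' \<and> rel X a x' y' \<and> lq y' w" using x z zw r lq_refl by blast
  then show ?thesis using rel_iff_sandwich[OF a x w] by blast
qed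

lemma mem_CU: "a \<in> CU \<longleftrightarrow> openin Tx a \<and> closedin Tx a \<and> a \<subseteq> Pt \<and> (\<forall>x\<in>a. \<forall>y\<in>Pt. lq x y \<longrightarrow> y \<in> a)"
  unfolding clopen_upsets_def is_clopen_def is_upset_def by blast

lemma CU_subset: "a \<in> CU \<Longrightarrow> a \<subseteq> Pt" using mem_CU by blast
lemma CU_up: "a \<in> CU \<Longrightarrow> x \<in> a \<Longrightarrow> y \<in> Pt \<Longrightarrow> lq x y \<Longrightarrow> y \<in> a" using mem_CU by blast
lemma CU_open: "a \<in> CU \<Longrightarrow> openin Tx a" using mem_CU by blast
lemma CU_closed: "a \<in> CU \<Longrightarrow> closedin Tx a" using mem_CU by blast

lemma Int_CU: "a \<in> CU \<Longrightarrow> b \<in> CU \<Longrightarrow> a \<inter> b \<in> CU"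
  unfolding mem_CU by blast
lemma Un_CU: "a \<in> CU \<Longrightarrow> b \<in> CU \<Longrightarrow> a \<union> b \<in> CU"
  unfolding mem_CU by blast
lemma Pt_CU: "Pt \<in> CU"
  unfolding mem_CU using topspace_Tx by (metis closedin_topspace openin_topspace order_refl)
lemma empty_CU: "{} \<in> CU"
  unfolding mem_CU by simp

lemma diff_down_CU:
  assumes a: "a \<in> CU" and b: "b \<in> CU"
  shows "Pt - down X (a - b) \<in> CU"
proof -
  have "is_clopen X (a - b)" unfolding is_clopen_def
    using openin_diff[OF CU_open[OF a] CU_closed[OF b]]
      closedin_diff[OF CU_closed[OF a] CU_open[OF b]] by blast
  then have D: "openin Tx (down X (a - b))" "closedin Tx (down X (a - b))"
    using is_clopen_down unfolding is_clopen_def by blast+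
  have o: "openin Tx (Pt - down X (a - b))"
    using openin_diff[OF openin_topspace D(2)] topspace_Tx by simp
  have c: "closedin Tx (Pt - down X (a - b))"
    using closedin_diff[OF closedin_topspace D(1)] topspace_Tx by simp
  have up: "y \<in> Pt - down X (a - b)"
    if x: "x \<in> Pt - down X (a - b)" and y: "y \<in> Pt" and xy: "lq x y" for x y
  proof (rule ccontr)
    assume "y \<notin> Pt - down X (a - b)"
    then obtain z where z: "z \<in> a - b" "lq y z" using y unfolding down_def by blast
    have "z \<in> Pt" using z CU_subset[OF a] by blast
    then have "lq x z" using lq_trans[OF _ y _ xy z(2)] x by blast
    then have "x \<in> down X (a - b)" unfolding down_def using x z by blast
    then show False using x by blast
  qed
  show ?thesis unfolding mem_CU using o c up by blast
qed

lemma ccond_CU: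
  assumes a: "a \<in> CU" and b: "b \<in> CU"
  shows "ccond X a b \<in> CU"
proof -
  have cl: "is_clopen X (ccond X a b)" using is_clopen_ccond[OF a b] .
  have up: "y \<in> ccond X a b" if x: "x \<in> ccond X a b" and y: "y \<in> Pt" and xy: "lq x y" for x y
  proof -
    have xP: "x \<in> Pt" and Rx: "{z. rel X a x z} \<subseteq> b" using x unfolding ccond_def by blast+
    have "{z. rel X a y z} \<subseteq> {z. rel X a x z}" using rel_le_left[OF a xP y xy] by blast
    then show ?thesis using Rx y unfolding ccond_def by blast
  qed
  show ?thesis unfolding mem_CU using cl up unfolding is_clopen_def ccond_def by blast
qed

lemma clpup_simps: "hcarrier (clpup X) = CU" "htop (clpup X) = Pt" "hbot (clpup X) = {}"
  "hmeet (clpup X) = (\<inter>)" "hjoin (clpup X) = (\<union>)" "himp (clpup X) = (\<lambda>a b. Pt - down X (a - b))"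
  "hcond (clpup X) = ccond X"
  by (simp_all add: clpup_def)

lemma hle_clpup: "hle (clpup X) a b \<longleftrightarrow> a \<inter> b = a"
  by (simp add: hle_def clpup_simps)

lemma subset_diff_down_iff:
  assumes a: "a \<in> CU" and c: "c \<in> CU"
  shows "c \<subseteq> Pt - down X (a - b) \<longleftrightarrow> c \<inter> a \<subseteq> b"
proof
  assume "c \<subseteq> Pt - down X (a - b)"
  then show "c \<inter> a \<subseteq> b"
    using CU_subset[OF a] lq_refl unfolding down_def by blast
next
  assume H: "c \<inter> a \<subseteq> b"
  have "x \<notin> down X (a - b)" if x: "x \<in> c" for x
  proof
    assume "x \<in> down X (a - b)"
    then obtain z where z: "z \<in> a - b" "lq x z"
      unfolding down_def by blast
    then have "z \<in> c"
      using CU_up[OF c x] CU_subset[OF a] by blast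
    then show False
      using H z by blast
  qed
  then show "c \<subseteq> Pt - down X (a - b)"
    using CU_subset[OF c] by blast
qed

lemma heyting_algebra_clpup: "heyting_algebra (clpup X)"
  unfolding heyting_algebra_def clpup_simps hle_clpup
proof (intro conjI ballI)
  show "Pt \<in> CU" "{} \<in> CU" "Pt \<noteq> {}"
    by (rule Pt_CU, rule empty_CU, rule Pt_ne)
  fix a b assume a: "a \<in> CU" and b: "b \<in> CU"
  show "a \<inter> b \<in> CU" "a \<union> b \<in> CU" "Pt - down X (a - b) \<in> CU"
    using Int_CU[OF a b] Un_CU[OF a b] diff_down_CU[OF a b] .
  fix c assume c: "c \<in> CU"
  show "(c \<inter> (Pt - down X (a - b)) = c) = (c \<inter> a \<inter> b = c \<inter> a)"
    using subset_diff_down_iff[OF a c] by blast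
next
  fix a assume "a \<in> CU"
  then show "a \<inter> Pt = a"
    using CU_subset by blast
qed auto

lemma cha_clpup: "cha (clpup X)"
  unfolding cha_def
proof (intro conjI ballI)
  show "heyting_algebra (clpup X)" by (rule heyting_algebra_clpup)
  fix a b assume a: "a \<in> hcarrier (clpup X)" and b: "b \<in> hcarrier (clpup X)"
  show "hcond (clpup X) a b \<in> hcarrier (clpup X)" using ccond_CU a b by (simp add: clpup_simps)
  fix c assume c: "c \<in> hcarrier (clpup X)"
  show "hcond (clpup X) a (hmeet (clpup X) b c) =
      hmeet (clpup X) (hcond (clpup X) a b) (hcond (clpup X) a c)"
    unfolding clpup_simps ccond_def by blast
next
  fix a assume a: "a \<in> hcarrier (clpup X)"
  show "hcond (clpup X) a (htop (clpup X)) = htop (clpup X)"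
    using rel_in_Pt a unfolding clpup_simps ccond_def by blast
qed

end

sublocale CES \<subseteq> C: CHA "clpup X"
  by unfold_locales (simp_all add: heyting_algebra_clpup cha_clpup)

context CES
begin

abbreviation "ep \<equiv> eps X"

lemma mem_ep: "a \<in> ep x \<longleftrightarrow> a \<in> CU \<and> x \<in> a" by (simp add: eps_def)

lemma prime_filter_clpupD:
  assumes P: "prime_filter (clpup X) P"
  shows "P \<subseteq> CU" "Pt \<in> P" "{} \<notin> P"
    "\<And>a b. a \<in> P \<Longrightarrow> b \<in> CU \<Longrightarrow> a \<subseteq> b \<Longrightarrow> b \<in> P"
    "\<And>a b. a \<in> P \<Longrightarrow> b \<in> P \<Longrightarrow> a \<inter> b \<in> P"
    "\<And>a b. a \<in> CU \<Longrightarrow> b \<in> CU \<Longrightarrow> a \<union> b \<in> P \<Longrightarrow> a \<in> P \<or> b \<in> P"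
proof -
  note D = C.prime_filterD[OF P, unfolded clpup_simps hle_clpup]
  show "P \<subseteq> CU" "Pt \<in> P" "{} \<notin> P" using D(1-3) .
  show "\<And>a b. a \<in> P \<Longrightarrow> b \<in> P \<Longrightarrow> a \<inter> b \<in> P" using D(5) .
  show "\<And>a b. a \<in> CU \<Longrightarrow> b \<in> CU \<Longrightarrow> a \<union> b \<in> P \<Longrightarrow> a \<in> P \<or> b \<in> P" using D(6) .
  fix a b assume "a \<in> P" "b \<in> CU" "a \<subseteq> b"
  moreover have "a \<inter> b = a" using \<open>a \<subseteq> b\<close> by blast
  ultimately show "b \<in> P" using D(4) by blast
qed

lemma prime_filter_ep:
  assumes x: "x \<in> Pt"
  shows "prime_filter (clpup X) (ep x)"
  unfolding prime_filter_def clpup_simps hle_clpup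
proof (intro conjI ballI impI)
  show "ep x \<subseteq> CU" by (auto simp: mem_ep)
  show "Pt \<in> ep x" using Pt_CU x by (simp add: mem_ep)
  show "{} \<notin> ep x" by (simp add: mem_ep)
  fix a b assume a: "a \<in> ep x" and b: "b \<in> CU" and ab: "a \<inter> b = a"
  show "b \<in> ep x" using a b ab by (auto simp: mem_ep)
next
  fix a b assume a: "a \<in> ep x" and b: "b \<in> ep x"
  show "a \<inter> b \<in> ep x" using a b Int_CU by (simp add: mem_ep)
next
  fix a b assume a: "a \<in> CU" and b: "b \<in> CU" and ab: "a \<union> b \<in> ep x"
  show "a \<in> ep x \<or> b \<in> ep x" using a b ab by (auto simp: mem_ep)
qed

lemma ep_in_PF: "x \<in> Pt \<Longrightarrow> ep x \<in> C.PF" using prime_filter_ep by (simp add: C.mem_PF)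

lemma ep_subset_iff:
  assumes x: "x \<in> Pt" and y: "y \<in> Pt"
  shows "ep x \<subseteq> ep y \<longleftrightarrow> lq x y"
proof
  assume H: "ep x \<subseteq> ep y"
  show "lq x y"
  proof (rule ccontr)
    assume "\<not> lq x y"
    then obtain U where "U \<in> CU" "x \<in> U" "y \<notin> U" using clopen_upset_separation[OF x y] by blast
    then show False using H by (auto simp: mem_ep)
  qed
next
  assume "lq x y"
  then show "ep x \<subseteq> ep y" using CU_up y by (auto simp: mem_ep)
qed

lemma inj_on_ep: "inj_on ep Pt"
proof (rule inj_onI)
  fix x y assume x: "x \<in> Pt" and y: "y \<in> Pt" and e: "ep x = ep y"
  then show "x = y" using ep_subset_iff[OF x y] ep_subset_iff[OF y x] lq_antisym[OF x y] by simp
qed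

lemma finite_Union_CU: "finite S \<Longrightarrow> S \<subseteq> CU \<Longrightarrow> \<Union>S \<in> CU"
  by (induction S rule: finite_induct) (auto intro: Un_CU empty_CU)

lemma prime_filter_clpup_Inter:
  assumes P: "prime_filter (clpup X) P"
  shows "finite S \<Longrightarrow> S \<subseteq> P \<Longrightarrow> Pt \<inter> \<Inter>S \<in> P"
proof (induction S rule: finite_induct)
  case empty
  then show ?case using prime_filter_clpupD(2)[OF P] by simp
next
  case (insert x F)
  have "Pt \<inter> \<Inter>(insert x F) = x \<inter> (Pt \<inter> \<Inter>F)" by blast
  then show ?case using insert prime_filter_clpupD(5)[OF P] by simp
qed

lemma prime_filter_clpup_Union:
  assumes P: "prime_filter (clpup X) P"
  shows "finite S \<Longrightarrow> S \<subseteq> CU \<Longrightarrow> \<Union>S \<in> P \<Longrightarrow> \<exists>s\<in>S. s \<in> P"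
proof (induction S rule: finite_induct)
  case empty
  then show ?case using prime_filter_clpupD(3)[OF P] by simp
next
  case (insert x F)
  have "x \<in> CU" "\<Union>F \<in> CU" using insert finite_Union_CU by auto
  moreover have "x \<union> \<Union>F \<in> P" using insert by simp
  ultimately have "x \<in> P \<or> \<Union>F \<in> P" using prime_filter_clpupD(6)[OF P] by blast
  then show ?case using insert by blast
qed

lemma prime_filter_clpup_not_covered:
  assumes P: "prime_filter (clpup X) P"
    and P0: "finite P0" "P0 \<subseteq> P" and B0: "finite B0" "B0 \<subseteq> CU - P"
  shows "\<not> Pt \<inter> \<Inter>P0 \<subseteq> \<Union>B0"
proof
  assume "Pt \<inter> \<Inter>P0 \<subseteq> \<Union>B0"
  moreover have "Pt \<inter> \<Inter>P0 \<in> P" "\<Union>B0 \<in> CU"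
    using prime_filter_clpup_Inter[OF P P0] finite_Union_CU[OF B0(1)] B0(2) by blast+
  ultimately have "\<Union>B0 \<in> P"
    using prime_filter_clpupD(4)[OF P] by blast
  then show False
    using prime_filter_clpup_Union[OF P B0(1)] B0(2) by blast
qed

text \<open>By compactness, the members of \<open>P\<close> and the complements of the clopen upsets outside \<open>P\<close>
  have a common point \<open>x\<close>, and then \<open>ep x = P\<close>.\<close>

lemma ep_surj:
  assumes P: "prime_filter (clpup X) P"
  shows "\<exists>x\<in>Pt. ep x = P"
proof -
  let ?\<U> = "P \<union> (\<lambda>b. Pt - b) ` (CU - P)"
  have PCU: "P \<subseteq> CU"
    using prime_filter_clpupD(1)[OF P] .
  have closed: "\<forall>C\<in>?\<U>. closedin Tx C"
    using PCU CU_closed closedin_diff[OF closedin_topspace CU_open] by (auto simp: topspace_Tx)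
  have fip: "\<forall>\<F>. finite \<F> \<and> \<F> \<subseteq> ?\<U> \<longrightarrow> \<Inter>\<F> \<noteq> {}"
  proof (intro allI impI, elim conjE)
    fix \<F> assume \<F>: "finite \<F>" "\<F> \<subseteq> ?\<U>"
    obtain B0 where B0: "B0 \<subseteq> CU - P" "finite B0" "\<F> - P = (\<lambda>b. Pt - b) ` B0"
      using finite_subset_image[of "\<F> - P" "\<lambda>b. Pt - b" "CU - P"] \<F> by blast
    obtain x where "x \<in> Pt \<inter> \<Inter>(\<F> \<inter> P)" "x \<notin> \<Union>B0"
      using prime_filter_clpup_not_covered[OF P _ _ B0(2,1), of "\<F> \<inter> P"] \<F>(1) by blast
    then have "x \<in> \<Inter>\<F>"
      using B0(3) by blast
    then show "\<Inter>\<F> \<noteq> {}" by blast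
  qed
  obtain x where x: "x \<in> \<Inter>?\<U>"
    using compact_space_fip[THEN iffD1, OF compact_Tx, rule_format, OF conjI[OF closed fip]]
    by blast
  have "x \<in> Pt"
    using x prime_filter_clpupD(2)[OF P] by blast
  moreover have "ep x = P"
  proof
    show "P \<subseteq> ep x"
      using x PCU by (auto simp: mem_ep)
    show "ep x \<subseteq> P"
    proof
      fix a assume "a \<in> ep x"
      then have a: "a \<in> CU" "x \<in> a" by (auto simp: mem_ep)
      show "a \<in> P"
      proof (rule ccontr)
        assume "a \<notin> P"
        then have "Pt - a \<in> ?\<U>" using a(1) by blast
        then show False using x a(2) by blast
      qed
    qed
  qed
  ultimately show ?thesis by blast
qed

lemma ep_preimage_th:
  assumes a: "a \<in> CU"
  shows "{x \<in> Pt. ep x \<in> C.th a} = a"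
  using prime_filter_ep a CU_subset[OF a] by (auto simp: C.mem_th mem_ep)

lemma ep_preimage_PF_diff_th:
  assumes a: "a \<in> CU"
  shows "{x \<in> Pt. ep x \<in> C.PF - C.th a} = Pt - a"
  using prime_filter_ep a CU_subset[OF a] by (auto simp: C.mem_th mem_ep C.mem_PF)

lemma continuous_map_ep: "continuous_map Tx C.PT ep"
proof -
  have "continuous_map Tx (topology_generated_by C.subbasis) ep"
  proof (rule continuous_on_generated_topo)
    fix U assume "U \<in> C.subbasis"
    then consider a where "a \<in> CU" "U = C.th a" | a where "a \<in> CU" "U = C.PF - C.th a"
      unfolding C.subbasis_def clpup_simps by blast
    then show "openin Tx (ep -` U \<inter> topspace Tx)"
    proof cases
      case 1
      have "ep -` U \<inter> topspace Tx = {x \<in> Pt. ep x \<in> C.th a}" unfolding 1 topspace_Tx by blast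
      then show ?thesis using ep_preimage_th[OF 1(1)] CU_open[OF 1(1)] by simp
    next
      case 2
      have "ep -` U \<inter> topspace Tx = {x \<in> Pt. ep x \<in> C.PF - C.th a}" unfolding 2 topspace_Tx by blast
      moreover have "openin Tx (Pt - a)"
        using openin_diff[OF openin_topspace CU_closed[OF 2(1)]] topspace_Tx by simp
      ultimately show ?thesis using ep_preimage_PF_diff_th[OF 2(1)] by simp
    qed
  next
    have "\<Union>C.subbasis = C.PF" using C.topspace_PT by (simp add: C.pf_simps)
    then show "ep ` topspace Tx \<subseteq> \<Union>C.subbasis" using ep_in_PF topspace_Tx by auto
  qed
  then show ?thesis by (simp add: C.pf_simps)
qed

lemma closed_map_ep: "closed_map Tx C.PT ep"
  by (meson closed_map_def closedin_compact_space compactin_imp_closedin image_compactin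
      continuous_map_ep compact_Tx C.Hausdorff_PT)

definition "ep_inv = inv_into Pt ep"

lemma ep_inv_ep: "x \<in> Pt \<Longrightarrow> ep_inv (ep x) = x"
  unfolding ep_inv_def using inv_into_f_f[OF inj_on_ep] .

lemma ep_ep_inv:
  assumes P: "P \<in> C.PF"
  shows "ep_inv P \<in> Pt" "ep (ep_inv P) = P"
proof -
  have "P \<in> ep ` Pt" using ep_surj P by (auto simp: C.mem_PF)
  then show "ep_inv P \<in> Pt" "ep (ep_inv P) = P"
    unfolding ep_inv_def by (rule inv_into_into, rule f_inv_into_f)
qed

lemma continuous_map_ep_inv: "continuous_map C.PT Tx ep_inv"
  unfolding continuous_map_closedin
proof (intro conjI allI impI)
  show "ep_inv \<in> topspace C.PT \<rightarrow> topspace Tx" using ep_ep_inv(1) C.topspace_PT topspace_Tx by auto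
  fix K assume K: "closedin Tx K"
  have Ksub: "K \<subseteq> Pt" using closedin_subset[OF K] topspace_Tx by simp
  have "{P \<in> topspace C.PT. ep_inv P \<in> K} = ep ` K"
  proof
    show "{P \<in> topspace C.PT. ep_inv P \<in> K} \<subseteq> ep ` K"
    proof
      fix P assume "P \<in> {P \<in> topspace C.PT. ep_inv P \<in> K}"
      then have P: "P \<in> C.PF" "ep_inv P \<in> K" using C.topspace_PT by auto
      then show "P \<in> ep ` K" using ep_ep_inv(2)[OF P(1)] by (metis image_eqI)
    qed
    show "ep ` K \<subseteq> {P \<in> topspace C.PT. ep_inv P \<in> K}"
      using Ksub ep_inv_ep ep_in_PF C.topspace_PT by auto
  qed
  then show "closedin C.PT {P \<in> topspace C.PT. ep_inv P \<in> K}"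
    using closed_map_ep K unfolding closed_map_def by simp
qed

lemma closedin_separated_by_CU:
  assumes K: "closedin Tx K"
    and w: "w \<in> Pt"
    and nle: "\<And>z. z \<in> K \<Longrightarrow> \<not> lq z w"
  shows "\<exists>c\<in>CU. K \<subseteq> c \<and> w \<notin> c"
proof -
  have Ksub: "K \<subseteq> Pt" using closedin_subset[OF K] topspace_Tx by simp
  have "\<forall>z\<in>K. \<exists>U. U \<in> CU \<and> z \<in> U \<and> w \<notin> U" using clopen_upset_separation w nle Ksub by blast
  then obtain Uf where Uf: "\<And>z. z \<in> K \<Longrightarrow> Uf z \<in> CU \<and> z \<in> Uf z \<and> w \<notin> Uf z" by metis
  have op: "openin Tx (Uf z)" if "z \<in> K" for z using Uf[OF that] CU_open by blast
  have mem: "z \<in> Uf z" if "z \<in> K" for z using Uf[OF that] by blast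
  obtain K0 where K0: "finite K0" "K0 \<subseteq> K" "K \<subseteq> \<Union>(Uf ` K0)"
    using compactin_finite_subcover[OF closedin_compact_space[OF compact_Tx K] op mem] by blast
  have "\<Union>(Uf ` K0) \<in> CU" using finite_Union_CU[of "Uf ` K0"] K0 Uf by blast
  moreover have "w \<notin> \<Union>(Uf ` K0)" using K0 Uf by blast
  ultimately show ?thesis using K0(3) by blast
qed

lemma rel_pf_ep_iff:
  assumes a: "a \<in> CU" and x: "x \<in> Pt" and y: "y \<in> Pt"
  shows "rel (pf (clpup X)) (C.th a) (ep x) (ep y) \<longleftrightarrow> rel X a x y"
proof -
  have ac: "a \<in> hcarrier (clpup X)" using a by (simp add: clpup_simps)
  have eq: "rel (pf (clpup X)) (C.th a) (ep x) (ep y) \<longleftrightarrow> {b \<in> CU. ccond X a b \<in> ep x} \<subseteq> ep y"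
    using C.rel_pf_th[OF ac] prime_filter_ep[OF x] prime_filter_ep[OF y] by (simp add: clpup_simps)
  show ?thesis
  proof
    assume "rel (pf (clpup X)) (C.th a) (ep x) (ep y)"
    then have S: "{b \<in> CU. ccond X a b \<in> ep x} \<subseteq> ep y" using eq by blast
    show "rel X a x y"
    proof (rule ccontr)
      assume nr: "\<not> rel X a x y"
      have nle: "\<not> lq z y" if "z \<in> {z. rel X a x z}" for z
        using rel_le_right[OF a x _ _ y] that nr by blast
      obtain c where c: "c \<in> CU" "{z. rel X a x z} \<subseteq> c" "y \<notin> c"
        using closedin_separated_by_CU[OF closedin_rel[OF a x] y nle] by blast
      have "x \<in> ccond X a c" unfolding ccond_def using x c by blast
      then have "ccond X a c \<in> ep x" using ccond_CU[OF a c(1)] by (simp add: mem_ep)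
      then have "c \<in> ep y" using S c(1) by blast
      then show False using c(3) by (simp add: mem_ep)
    qed
  next
    assume r: "rel X a x y"
    have "{b \<in> CU. ccond X a b \<in> ep x} \<subseteq> ep y"
    proof
      fix b assume "b \<in> {b \<in> CU. ccond X a b \<in> ep x}"
      then have b: "b \<in> CU" "x \<in> ccond X a b" by (auto simp: mem_ep)
      then have "y \<in> b" using r unfolding ccond_def by blast
      then show "b \<in> ep y" using b by (simp add: mem_ep)
    qed
    then show "rel (pf (clpup X)) (C.th a) (ep x) (ep y)" using eq by blast
  qed
qed

lemma clopen_upsets_pf_clpup: "clopen_upsets (pf (clpup X)) = C.th ` CU"
  using C.clopen_upsets_pf by (simp add: clpup_simps)

lemma ces_morph_ep: "ces_morph X (pf (clpup X)) ep"
  unfolding ces_morph_def C.pf_simps(1,2)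
proof (intro conjI ballI impI)
  show "ep \<in> Pt \<rightarrow> C.PF" using ep_in_PF by blast
  show "continuous_map Tx C.PT ep" by (rule continuous_map_ep)
  fix x assume x: "x \<in> Pt"
  {
    fix y assume y: "y \<in> Pt" and "lq x y"
    then show "ep x \<subseteq> ep y" using ep_subset_iff[OF x y] by blast
  }
  {
    fix z' assume z': "z' \<in> C.PF" and le: "ep x \<subseteq> z'"
    obtain z where z: "z \<in> Pt" "ep z = z'" using ep_surj z' by (auto simp: C.mem_PF)
    then show "\<exists>z\<in>Pt. lq x z \<and> ep z = z'" using ep_subset_iff[OF x z(1)] le by blast
  }
next
  fix a' assume "a' \<in> clopen_upsets (pf (clpup X))"
  then obtain a where a: "a \<in> CU" "a' = C.th a" unfolding clopen_upsets_pf_clpup by blast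
  have pre: "{u \<in> Pt. ep u \<in> C.th a} = a" using ep_preimage_th[OF a(1)] by simp
  {
    fix x y assume x: "x \<in> Pt" and y: "y \<in> Pt" and r: "rel X {u \<in> Pt. ep u \<in> a'} x y"
    show "rel (pf (clpup X)) a' (ep x) (ep y)"
      using r rel_pf_ep_iff[OF a(1) x y] unfolding a(2) pre by blast
  }
  {
    fix x z' assume x: "x \<in> Pt" and z': "z' \<in> C.PF" and r: "rel (pf (clpup X)) a' (ep x) z'"
    obtain w where w: "w \<in> Pt" "ep w = z'" using ep_surj z' by (auto simp: C.mem_PF)
    have "rel X a x w" using rel_pf_ep_iff[OF a(1) x w(1)] r w a(2) by simp
    then show "\<exists>z\<in>Pt. rel X {u \<in> Pt. ep u \<in> a'} x z \<and> ep z \<subseteq> z'" unfolding a(2) pre using w by blast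
  }
qed

lemma ep_inv_preimage:
  assumes a: "a \<in> CU"
  shows "{u \<in> C.PF. ep_inv u \<in> a} = C.th a"
proof -
  have "ep_inv u \<in> a \<longleftrightarrow> a \<in> u" if "u \<in> C.PF" for u
    using ep_ep_inv[OF that] a by (metis mem_ep)
  then show ?thesis
    by (auto simp: C.mem_th C.mem_PF)
qed

lemma ces_morph_ep_inv: "ces_morph (pf (clpup X)) X ep_inv"
  unfolding ces_morph_def C.pf_simps(1,2)
proof (intro conjI ballI impI)
  show "ep_inv \<in> C.PF \<rightarrow> Pt" using ep_ep_inv(1) by blast
  show "continuous_map C.PT Tx ep_inv" by (rule continuous_map_ep_inv)
  fix p assume p: "p \<in> C.PF"
  have gp: "ep_inv p \<in> Pt" "ep (ep_inv p) = p" using ep_ep_inv[OF p] by blast+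
  {
    fix q assume q: "q \<in> C.PF" and pq: "p \<subseteq> q"
    have gq: "ep_inv q \<in> Pt" "ep (ep_inv q) = q" using ep_ep_inv[OF q] by blast+
    show "lq (ep_inv p) (ep_inv q)" using ep_subset_iff[OF gp(1) gq(1)] pq gp gq by simp
  }
  {
    fix z' assume z': "z' \<in> Pt" and le: "lq (ep_inv p) z'"
    have "p \<subseteq> ep z'" using ep_subset_iff[OF gp(1) z'] le gp by simp
    then show "\<exists>z\<in>C.PF. p \<subseteq> z \<and> ep_inv z = z'" using ep_in_PF[OF z'] ep_inv_ep[OF z'] by blast
  }
next
  fix a assume a: "a \<in> CU"
  have pre: "{u \<in> C.PF. ep_inv u \<in> a} = C.th a"
    by (rule ep_inv_preimage[OF a])
  {
    fix p q assume p: "p \<in> C.PF" and q: "q \<in> C.PF"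
      and r: "rel (pf (clpup X)) {u \<in> C.PF. ep_inv u \<in> a} p q"
    have gp: "ep_inv p \<in> Pt" "ep (ep_inv p) = p" using ep_ep_inv[OF p] by blast+
    have gq: "ep_inv q \<in> Pt" "ep (ep_inv q) = q" using ep_ep_inv[OF q] by blast+
    show "rel X a (ep_inv p) (ep_inv q)"
      using rel_pf_ep_iff[OF a gp(1) gq(1)] r unfolding pre gp(2) gq(2) by blast
  }
  {
    fix p z' assume p: "p \<in> C.PF" and z': "z' \<in> Pt" and r: "rel X a (ep_inv p) z'"
    have gp: "ep_inv p \<in> Pt" "ep (ep_inv p) = p" using ep_ep_inv[OF p] by blast+
    have "rel (pf (clpup X)) (C.th a) p (ep z')" using rel_pf_ep_iff[OF a gp(1) z'] r gp(2) by simp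
    then show "\<exists>z\<in>C.PF. rel (pf (clpup X)) {u \<in> C.PF. ep_inv u \<in> a} p z \<and> lq (ep_inv z) z'"
      unfolding pre
        using ep_in_PF[OF z'] ep_inv_ep[OF z'] lq_refl[OF z'] by (intro bexI[of _ "ep z'"]) simp_all
  }
qed

lemma ces_iso_ep: "ces_iso X (pf (clpup X)) ep"
  unfolding ces_iso_def
proof (intro conjI exI[of _ ep_inv])
  show "ces_morph X (pf (clpup X)) ep" by (rule ces_morph_ep)
  show "ces_morph (pf (clpup X)) X ep_inv" by (rule ces_morph_ep_inv)
  show "\<forall>x\<in>Pt. ep_inv (ep x) = x" using ep_inv_ep by blast
  show "\<forall>y\<in>pts (pf (clpup X)). ep (ep_inv y) = y" using ep_ep_inv(2) by (simp add: C.pf_simps)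
qed

end

locale CES_morph = X: CES X + Y: CES Y for X :: "'x ces_sig" and Y :: "'y ces_sig" +
  fixes f :: "'x \<Rightarrow> 'y"
  assumes mor: "ces_morph X Y f"
begin

lemma f_in: "x \<in> X.Pt \<Longrightarrow> f x \<in> Y.Pt"
  and f_cont: "continuous_map X.Tx Y.Tx f"
  and f_mono: "x \<in> X.Pt \<Longrightarrow> y \<in> X.Pt \<Longrightarrow> X.lq x y \<Longrightarrow> Y.lq (f x) (f y)"
  and f_bounded: "x \<in> X.Pt \<Longrightarrow> z' \<in> Y.Pt \<Longrightarrow> Y.lq (f x) z' \<Longrightarrow> \<exists>z\<in>X.Pt. X.lq x z \<and> f z = z'"
  and f_rel_forth: "a' \<in> Y.CU \<Longrightarrow> x \<in> X.Pt \<Longrightarrow> y \<in> X.Pt \<Longrightarrow>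
     rel X {u \<in> X.Pt. f u \<in> a'} x y \<Longrightarrow> rel Y a' (f x) (f y)"
  and f_rel_back: "a' \<in> Y.CU \<Longrightarrow> x \<in> X.Pt \<Longrightarrow> z' \<in> Y.Pt \<Longrightarrow> rel Y a' (f x) z' \<Longrightarrow>
     \<exists>z\<in>X.Pt. rel X {u \<in> X.Pt. f u \<in> a'} x z \<and> Y.lq (f z) z'"
  using mor unfolding ces_morph_def by blast+

abbreviation "pre \<equiv> clpup_mor X f"

lemma pre_eq: "pre a = {u \<in> X.Pt. f u \<in> a}" by (simp add: clpup_mor_def)

lemma clpup_mor_CU:
  assumes a: "a \<in> Y.CU"
  shows "pre a \<in> X.CU"
proof -
  have o: "openin X.Tx (pre a)"
    using openin_continuous_map_preimage[OF f_cont Y.CU_open[OF a]]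
    by (simp add: pre_eq X.topspace_Tx)
  have c: "closedin X.Tx (pre a)"
    using closedin_continuous_map_preimage[OF f_cont Y.CU_closed[OF a]]
    by (simp add: pre_eq X.topspace_Tx)
  have up: "y \<in> pre a" if x: "x \<in> pre a" and y: "y \<in> X.Pt" and xy: "X.lq x y" for x y
  proof -
    have xP: "x \<in> X.Pt" "f x \<in> a" using x by (auto simp: pre_eq)
    have "Y.lq (f x) (f y)" using f_mono[OF xP(1) y xy] .
    then have "f y \<in> a" using Y.CU_up[OF a xP(2) f_in[OF y]] by blast
    then show ?thesis using y by (simp add: pre_eq)
  qed
  show ?thesis unfolding X.mem_CU using o c up by (auto simp: pre_eq)
qed

lemma clpup_mor_down:
  assumes a: "a \<in> Y.CU" and b: "b \<in> Y.CU" and x: "x \<in> X.Pt"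
  shows "f x \<in> down Y (a - b) \<longleftrightarrow> x \<in> down X (pre a - pre b)"
proof
  assume "f x \<in> down Y (a - b)"
  then obtain z' where z': "z' \<in> a - b" "Y.lq (f x) z'" unfolding down_def by blast
  have "z' \<in> Y.Pt" using z' Y.CU_subset[OF a] by blast
  then obtain z where z: "z \<in> X.Pt" "X.lq x z" "f z = z'" using f_bounded[OF x _ z'(2)] by blast
  have "z \<in> pre a - pre b" using z z' by (simp add: pre_eq)
  then show "x \<in> down X (pre a - pre b)" unfolding down_def using x z by blast
next
  assume "x \<in> down X (pre a - pre b)"
  then obtain z where z: "z \<in> pre a - pre b" "X.lq x z" unfolding down_def by blast
  have zP: "z \<in> X.Pt" "f z \<in> a" "f z \<notin> b" using z by (auto simp: pre_eq)
  have "Y.lq (f x) (f z)" using f_mono[OF x zP(1) z(2)] .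
  then show "f x \<in> down Y (a - b)" unfolding down_def using f_in[OF x] zP by blast
qed

lemma clpup_mor_ccond:
  assumes a: "a \<in> Y.CU" and b: "b \<in> Y.CU"
  shows "pre (ccond Y a b) = ccond X (pre a) (pre b)"
proof
  show "pre (ccond Y a b) \<subseteq> ccond X (pre a) (pre b)"
  proof
    fix x assume "x \<in> pre (ccond Y a b)"
    then have x: "x \<in> X.Pt" and R: "{y. rel Y a (f x) y} \<subseteq> b" by (auto simp: pre_eq ccond_def)
    have "y \<in> pre b" if r: "rel X (pre a) x y" for y
    proof -
      have y: "y \<in> X.Pt" using X.rel_in_Pt[OF clpup_mor_CU[OF a] r] by blast
      have "rel Y a (f x) (f y)" using f_rel_forth[OF a x y] r by (simp add: pre_eq)
      then show ?thesis using R y by (auto simp: pre_eq)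
    qed
    then show "x \<in> ccond X (pre a) (pre b)" using x unfolding ccond_def by blast
  qed
next
  show "ccond X (pre a) (pre b) \<subseteq> pre (ccond Y a b)"
  proof
    fix x assume "x \<in> ccond X (pre a) (pre b)"
    then have x: "x \<in> X.Pt" and R: "\<And>y. rel X (pre a) x y \<Longrightarrow> y \<in> pre b" unfolding ccond_def by blast+
    have "z' \<in> b" if r: "rel Y a (f x) z'" for z'
    proof -
      have z': "z' \<in> Y.Pt" using Y.rel_in_Pt[OF a r] by blast
      obtain z where z: "z \<in> X.Pt" "rel X {u \<in> X.Pt. f u \<in> a} x z" "Y.lq (f z) z'"
        using f_rel_back[OF a x z' r] by blast
      have "z \<in> pre b" using R z(2) by (simp add: pre_eq)
      then have "f z \<in> b" by (simp add: pre_eq)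
      then show ?thesis using Y.CU_up[OF b _ z' z(3)] by blast
    qed
    then show "x \<in> pre (ccond Y a b)" using x f_in[OF x] unfolding ccond_def pre_eq by blast
  qed
qed

lemma cha_hom_clpup_mor: "cha_hom (clpup Y) (clpup X) pre"
  unfolding cha_hom_def X.clpup_simps Y.clpup_simps
proof (intro conjI ballI)
  show "pre \<in> Y.CU \<rightarrow> X.CU" using clpup_mor_CU by blast
  show "pre Y.Pt = X.Pt" using f_in by (auto simp: pre_eq)
  show "pre {} = {}" by (simp add: pre_eq)
  fix a b assume a: "a \<in> Y.CU" and b: "b \<in> Y.CU"
  show "pre (a \<inter> b) = pre a \<inter> pre b" by (auto simp: pre_eq)
  show "pre (a \<union> b) = pre a \<union> pre b" by (auto simp: pre_eq)
  show "pre (ccond Y a b) = ccond X (pre a) (pre b)" by (rule clpup_mor_ccond[OF a b])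
  show "pre (Y.Pt - down Y (a - b)) = X.Pt - down X (pre a - pre b)"
    using clpup_mor_down[OF a b] f_in by (auto simp: pre_eq)
qed

lemma pf_mor_clpup_mor_eps:
  assumes x: "x \<in> X.Pt"
  shows "pf_mor (clpup Y) pre (eps X x) = eps Y (f x)"
  using x f_in clpup_mor_CU by (auto simp: pf_mor_def Y.clpup_simps eps_def pre_eq)

end

section \<open>The duality\<close>

lemma CHA_I: "cha A \<Longrightarrow> CHA A"
  by (simp add: CHA_def HA_def CHA_axioms_def cha_def)

lemma CHA_homI: "cha A \<Longrightarrow> cha B \<Longrightarrow> cha_hom A B h \<Longrightarrow> CHA_hom A B h"
  by (simp add: CHA_hom_def CHA_hom_axioms_def CHA_I)

lemma CES_I: "ces X \<Longrightarrow> CES X"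
  by (simp add: CES_def)

lemma CES_morphI: "ces X \<Longrightarrow> ces Y \<Longrightarrow> ces_morph X Y f \<Longrightarrow> CES_morph X Y f"
  by (simp add: CES_morph_def CES_morph_axioms_def CES_I)

lemma clpup_mor_id: "a \<in> clopen_upsets X \<Longrightarrow> clpup_mor X id a = a"
  by (auto simp: clpup_mor_def clopen_upsets_def is_upset_def)

lemma clpup_mor_comp: "ces_morph X Y f \<Longrightarrow> clpup_mor X (g \<circ> f) a = clpup_mor X f (clpup_mor Y g a)"
  by (auto simp: clpup_mor_def ces_morph_def)

lemma pf_mor_id: "p \<in> pts (pf A) \<Longrightarrow> pf_mor A id p = p"
  by (auto simp: pf_mor_def pf_def prime_filter_def)

lemma pf_mor_comp: "cha_hom A B h \<Longrightarrow> pf_mor A (k \<circ> h) p = pf_mor A h (pf_mor B k p)"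
  by (auto simp: pf_mor_def cha_hom_def)

theorem theorem4p23:
  shows
  "\<comment> \<open>ClpUp is a contravariant functor CES -> CHA\<close>
   (\<forall>X :: 'x ces_sig. ces X \<longrightarrow> cha (clpup X)) \<and>
   (\<forall>(X :: 'x ces_sig) (Y :: 'y ces_sig) f. ces X \<and> ces Y \<and> ces_morph X Y f \<longrightarrow>
      cha_hom (clpup Y) (clpup X) (clpup_mor X f)) \<and>
   (\<forall>X :: 'x ces_sig. ces X \<longrightarrow> (\<forall>a\<in>clopen_upsets X. clpup_mor X id a = a)) \<and>
   (\<forall>(X :: 'x ces_sig) (Y :: 'y ces_sig) (Z :: 'z ces_sig) f g.
      ces X \<and> ces Y \<and> ces Z \<and> ces_morph X Y f \<and> ces_morph Y Z g \<longrightarrow>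
      (\<forall>a\<in>clopen_upsets Z. clpup_mor X (g \<circ> f) a = clpup_mor X f (clpup_mor Y g a))) \<and>
   \<comment> \<open>Pf is a contravariant functor CHA -> CES\<close>
   (\<forall>A :: 'a cha_sig. cha A \<longrightarrow> ces (pf A)) \<and>
   (\<forall>(A :: 'a cha_sig) (B :: 'b cha_sig) h. cha A \<and> cha B \<and> cha_hom A B h \<longrightarrow>
      ces_morph (pf B) (pf A) (pf_mor A h)) \<and>
   (\<forall>A :: 'a cha_sig. cha A \<longrightarrow> (\<forall>p\<in>pts (pf A). pf_mor A id p = p)) \<and>
   (\<forall>(A :: 'a cha_sig) (B :: 'b cha_sig) (C :: 'c cha_sig) h k.
      cha A \<and> cha B \<and> cha C \<and> cha_hom A B h \<and> cha_hom B C k \<longrightarrow>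
      (\<forall>p\<in>pts (pf C). pf_mor A (k \<circ> h) p = pf_mor A h (pf_mor B k p))) \<and>
   \<comment> \<open>natural isomorphism Id_CHA = ClpUp o Pf\<close>
   (\<forall>A :: 'a cha_sig. cha A \<longrightarrow> cha_iso A (clpup (pf A)) (theta A)) \<and>
   (\<forall>(A :: 'a cha_sig) (B :: 'b cha_sig) h. cha A \<and> cha B \<and> cha_hom A B h \<longrightarrow>
      (\<forall>a\<in>hcarrier A. clpup_mor (pf B) (pf_mor A h) (theta A a) = theta B (h a))) \<and>
   \<comment> \<open>natural isomorphism Id_CES = Pf o ClpUp\<close>
   (\<forall>X :: 'x ces_sig. ces X \<longrightarrow> ces_iso X (pf (clpup X)) (eps X)) \<and>
   (\<forall>(X :: 'x ces_sig) (Y :: 'y ces_sig) f. ces X \<and> ces Y \<and> ces_morph X Y f \<longrightarrow>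
      (\<forall>x\<in>pts X. pf_mor (clpup Y) (clpup_mor X f) (eps X x) = eps Y (f x)))"
proof (intro conjI allI impI ballI; (elim conjE)?)
  fix X :: "'x ces_sig"
  assume "ces X"
  then interpret CES X
    by (rule CES_I)
  show "cha (clpup X)" by (rule cha_clpup)
  show "ces_iso X (pf (clpup X)) (eps X)" by (rule ces_iso_ep)
next
  fix X :: "'x ces_sig" and Y :: "'y ces_sig" and f x
  assume "ces X" "ces Y" "ces_morph X Y f"
  then interpret CES_morph X Y f
    by (rule CES_morphI)
  show "cha_hom (clpup Y) (clpup X) (clpup_mor X f)" by (rule cha_hom_clpup_mor)
  show "x \<in> pts X \<Longrightarrow> pf_mor (clpup Y) (clpup_mor X f) (eps X x) = eps Y (f x)"
    by (rule pf_mor_clpup_mor_eps)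
next
  fix A :: "'a cha_sig"
  assume "cha A"
  then interpret CHA A
    by (rule CHA_I)
  show "ces (pf A)" by (rule ces_pf)
  show "cha_iso A (clpup (pf A)) (theta A)" by (rule cha_iso_theta)
next
  fix A :: "'a cha_sig" and B :: "'b cha_sig" and h a
  assume "cha A" "cha B" "cha_hom A B h"
  then interpret CHA_hom A B h
    by (rule CHA_homI)
  show "ces_morph (pf B) (pf A) (pf_mor A h)" by (rule ces_morph_pfm)
  show "a \<in> hcarrier A \<Longrightarrow> clpup_mor (pf B) (pf_mor A h) (theta A a) = theta B (h a)"
    by (rule clpup_mor_pfm_theta)
qed (simp_all add: clpup_mor_id clpup_mor_comp pf_mor_id pf_mor_comp)

end
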